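(* Let $G=G^\uparrow\rtimes\{e,\sigma\}$ be a graded Lie group, $(U,\mathcal H)$ an (anti-)unitary representation of $G$, and $\alpha\in Z(G^\uparrow)^-$. Then the commutant $U(G^\uparrow)'$ contains a unitary $Z_\alpha$ with $Z_\alpha^2=U(\alpha)$ and $U(g)Z_\alpha U(g)^{-1}=Z_\alpha^{-1}$ for every $g\in G^\downarrow$.
   Context: $G$ is a finite-dimensional Lie group with continuous homomorphism $\varepsilon_G\colon G\to\{\pm1\}$, $G^\uparrow=\ker\varepsilon_G$, $G^\downarrow=G\setminus G^\uparrow$, $\sigma\in G^\downarrow$ an involution. An (anti-)unitary representation is a continuous homomorphism $U\colon G\to\operatorname{AU}(\mathcal H)$ into the group of unitary and antiunitary operators with $U(g)$ antiunitary iff $g\in G^\downarrow$. $Z(G^\uparrow)$ is the center of $G^\uparrow$ and $Z(G^\uparrow)^-=\{\alpha\in Z(G^\uparrow):\sigma\alpha\sigma=\alpha^{-1}\}$ (independent of the choice of $\sigma\in G^\downarrow$). *)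

theory Defs
  imports "HOL-Analysis.Analysis" "HOL-Algebra.Group"
begin

definition hnorm :: "('h \<Rightarrow> 'h \<Rightarrow> complex) \<Rightarrow> 'h \<Rightarrow> real" where
  "hnorm ip x = sqrt (Re (ip x x))"

locale chilbert =
  fixes sc :: "complex \<Rightarrow> 'h::ab_group_add \<Rightarrow> 'h"
    and ip :: "'h \<Rightarrow> 'h \<Rightarrow> complex"
  assumes sc_add_right: "sc a (x + y) = sc a x + sc a y"
    and sc_add_left: "sc (a + b) x = sc a x + sc b x"
    and sc_assoc: "sc a (sc b x) = sc (a * b) x"
    and sc_one: "sc 1 x = x"
    and ip_add_right: "ip x (y + z) = ip x y + ip x z"
    and ip_sc_right: "ip x (sc a y) = a * ip x y"
    and ip_sym: "ip y x = cnj (ip x y)"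
    and ip_pos: "x \<noteq> 0 \<Longrightarrow> Re (ip x x) > 0"
    and complete: "(\<forall>e>0. \<exists>N. \<forall>m\<ge>N. \<forall>n\<ge>N. hnorm ip (X m - X n) < e)
                    \<Longrightarrow> \<exists>L. (\<lambda>n. hnorm ip (X n - L)) \<longlonglongrightarrow> 0"

definition unitary_op :: "(complex \<Rightarrow> 'h::ab_group_add \<Rightarrow> 'h) \<Rightarrow> ('h \<Rightarrow> 'h \<Rightarrow> complex) \<Rightarrow> ('h \<Rightarrow> 'h) \<Rightarrow> bool" where
  "unitary_op sc ip A \<longleftrightarrow> bij A \<and> (\<forall>x y. A (x + y) = A x + A y)
     \<and> (\<forall>a x. A (sc a x) = sc a (A x)) \<and> (\<forall>x y. ip (A x) (A y) = ip x y)"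

definition antiunitary_op :: "(complex \<Rightarrow> 'h::ab_group_add \<Rightarrow> 'h) \<Rightarrow> ('h \<Rightarrow> 'h \<Rightarrow> complex) \<Rightarrow> ('h \<Rightarrow> 'h) \<Rightarrow> bool" where
  "antiunitary_op sc ip A \<longleftrightarrow> bij A \<and> (\<forall>x y. A (x + y) = A x + A y)
     \<and> (\<forall>a x. A (sc a x) = sc (cnj a) (A x)) \<and> (\<forall>x y. ip (A x) (A y) = cnj (ip x y))"

text \<open>G is a (Hausdorff) topological group with topology T (on its carrier) and
  eps : G \<rightarrow> {1,-1} a continuous homomorphism.  G-up = {g. eps g = 1}, G-down = {g. eps g = -1}.\<close>

definition graded_top_group :: "('g, 'b) monoid_scheme \<Rightarrow> 'g topology \<Rightarrow> ('g \<Rightarrow> real) \<Rightarrow> bool" where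
  "graded_top_group G T eps \<longleftrightarrow> group G \<and> topspace T = carrier G \<and> Hausdorff_space T
     \<and> continuous_map (prod_topology T T) T (\<lambda>(x, y). x \<otimes>\<^bsub>G\<^esub> y)
     \<and> continuous_map T T (\<lambda>x. inv\<^bsub>G\<^esub> x)
     \<and> (\<forall>g\<in>carrier G. eps g \<in> {1, -1})
     \<and> (\<forall>x\<in>carrier G. \<forall>y\<in>carrier G. eps (x \<otimes>\<^bsub>G\<^esub> y) = eps x * eps y)
     \<and> continuous_map T euclideanreal eps"

definition au_rep :: "('g, 'b) monoid_scheme \<Rightarrow> 'g topology \<Rightarrow> ('g \<Rightarrow> real)
    \<Rightarrow> (complex \<Rightarrow> 'h::ab_group_add \<Rightarrow> 'h) \<Rightarrow> ('h \<Rightarrow> 'h \<Rightarrow> complex) \<Rightarrow> ('g \<Rightarrow> 'h \<Rightarrow> 'h) \<Rightarrow> bool" where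
  "au_rep G T eps sc ip U \<longleftrightarrow>
     (\<forall>g\<in>carrier G. (eps g = 1 \<longrightarrow> unitary_op sc ip (U g))
                   \<and> (eps g = -1 \<longrightarrow> antiunitary_op sc ip (U g)))
     \<and> (\<forall>g\<in>carrier G. \<forall>h\<in>carrier G. U (g \<otimes>\<^bsub>G\<^esub> h) = U g \<circ> U h)
     \<and> (\<forall>v. \<forall>g0\<in>carrier G. \<forall>e>0. \<exists>W. openin T W \<and> g0 \<in> W
            \<and> (\<forall>g\<in>W. hnorm ip (U g v - U g0 v) < e))"

end

(*
  Write A = U(alpha). The operators C = (A + A^-1)/2 and S = (A - A^-1)/(2i) are commuting
  self-adjoint contractions with A = C + iS and C^2 + S^2 = 1; think of them as cos theta and
  sin theta. The binomial series of sqrt(1 + x), absolutely convergent on [-1, 1], gives the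
  square roots c of (1 + C)/2 and s0 of (1 - C)/2, i.e. |cos(theta/2)| and |sin(theta/2)|.
  The sign of sin(theta/2) is read off from the kernel of |S| - S, where |S| = 2 c s0: its
  orthogonal projection P is a strong limit of powers of 1 - (|S| - S)^2 / const. With
  s = (2P - 1) s0, the operator Z = c + is is unitary and Z^2 = c^2 - s^2 + 2ics = C + iS = A.
  All these operators are strong limits of real polynomials in A and A^-1, so Z commutes with
  every unitary commuting with A, and an antiunitary J with J A J^-1 = A^-1 commutes with C
  and S, hence maps Z = c + is to c - is = Z^-1. Finally, for g in the odd coset, g sigma is
  even and commutes with alpha, and sigma alpha sigma = alpha^-1 gives g alpha g^-1 = alpha^-1.
*)

theory Submission
  imports Defs
begin

section \<open>The binomial series of the square root\<close>

definition sqrt_coeff :: "nat \<Rightarrow> real" where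
  "sqrt_coeff k = (1/2) gchoose k"

lemma sqrt_coeff_convolution:
  "(\<Sum>i\<le>k. sqrt_coeff i * sqrt_coeff (k - i)) = (if k \<le> 1 then 1 else 0)"
proof -
  have "(\<Sum>i\<le>k. sqrt_coeff i * sqrt_coeff (k - i)) = (1/2 + 1/2 :: real) gchoose k"
    unfolding sqrt_coeff_def using gbinomial_Vandermonde[of "1/2::real" "1/2" k]
    by (simp add: atMost_atLeast0)
  also have "\<dots> = of_nat (1 choose k)" by (simp add: binomial_gbinomial)
  finally show ?thesis by (cases k) (auto simp: binomial_eq_0)
qed

lemma alternating_sqrt_coeff_sum:
  "(\<Sum>k\<le>m. (-1)^k * sqrt_coeff k) = (real m - 1/2) gchoose m"
  using gbinomial_sum_lower_neg[of "1/2::real" m] gbinomial_negated_upper[of "-1/2::real" m]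
  by (simp add: sqrt_coeff_def mult.commute power_mult_distrib[symmetric])

lemma gchoose_minus_half_Suc:
  "(real m + 1) * ((real (Suc m) - 1/2) gchoose Suc m) = (real m + 1/2) * ((real m - 1/2) gchoose m)"
  using gbinomial_absorption[of m "real m + 1/2"] by (simp add: algebra_simps)

lemma gchoose_minus_half_pos: "((real m - 1/2) gchoose m) > 0"
proof (induction m)
  case (Suc m)
  then have "(real m + 1) * ((real (Suc m) - 1/2) gchoose Suc m) > 0"
    unfolding gchoose_minus_half_Suc by simp
  then show ?case by (simp add: zero_less_mult_iff)
qed simp

lemma abs_sqrt_coeff_Suc:
  "\<bar>sqrt_coeff (Suc m)\<bar> = ((real m - 1/2) gchoose m) - ((real (Suc m) - 1/2) gchoose Suc m)"
proof -
  define a b where "a = (real m - 1/2) gchoose m" and "b = (real (Suc m) - 1/2) gchoose Suc m"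
  have "(-1)^Suc m * sqrt_coeff (Suc m) = b - a"
    using alternating_sqrt_coeff_sum[of "Suc m"] alternating_sqrt_coeff_sum[of m]
    by (simp add: a_def b_def)
  moreover have "(real m + 1) * b = (real m + 1/2) * a" "a > 0"
    unfolding a_def b_def by (rule gchoose_minus_half_Suc gchoose_minus_half_pos)+
  then have "(real m + 1) * b < (real m + 1) * a" by (simp add: algebra_simps)
  then have "b < a" by (simp add: mult_less_cancel_left_pos)
  ultimately show ?thesis unfolding a_def b_def by (cases "even m") (auto simp: abs_if)
qed

lemma sum_abs_sqrt_coeff: "(\<Sum>k\<le>m. \<bar>sqrt_coeff k\<bar>) = 2 - ((real m - 1/2) gchoose m)"
  by (induction m) (simp_all add: abs_sqrt_coeff_Suc, simp add: sqrt_coeff_def)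

lemma sum_abs_sqrt_coeff_le: "(\<Sum>k<n. \<bar>sqrt_coeff k\<bar>) \<le> 2"
proof (cases n)
  case (Suc m)
  then show ?thesis
    using sum_abs_sqrt_coeff[of m] gchoose_minus_half_pos[of m] by (simp add: lessThan_Suc_atMost)
qed simp

lemma summable_abs_sqrt_coeff: "summable (\<lambda>k. \<bar>sqrt_coeff k\<bar>)"
  by (rule summableI_nonneg_bounded[where x=2]) (auto simp: sum_abs_sqrt_coeff_le)

context chilbert
begin

abbreviation nrm :: "'h \<Rightarrow> real" where
  "nrm x \<equiv> hnorm ip x"

lemma sc_zero_left[simp]: "sc 0 x = 0"
proof -
  have "sc (0 + 0) x = sc 0 x + sc 0 x" by (rule sc_add_left)
  then show ?thesis by simp
qed

lemma sc_zero_right[simp]: "sc a 0 = 0"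
proof -
  have "sc a (0 + 0) = sc a 0 + sc a 0" by (rule sc_add_right)
  then show ?thesis by simp
qed

lemma sc_minus_right: "sc a (- x) = - sc a x"
proof -
  have "sc a (x + - x) = sc a x + sc a (- x)" by (rule sc_add_right)
  then show ?thesis by (simp add: eq_neg_iff_add_eq_0 add.commute)
qed

lemma sc_diff_right: "sc a (x - y) = sc a x - sc a y"
  using sc_add_right[of a x "- y"] by (simp add: sc_minus_right)

lemma sc_minus_left: "sc (- a) x = - sc a x"
proof -
  have "sc (a + - a) x = sc a x + sc (- a) x" by (rule sc_add_left)
  then show ?thesis by (simp add: eq_neg_iff_add_eq_0 add.commute)
qed

lemma sc_sum_right: "sc a (\<Sum>i\<in>A. f i) = (\<Sum>i\<in>A. sc a (f i))"
  by (induction A rule: infinite_finite_induct) (auto simp: sc_add_right)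

lemma sc_sum_left: "sc (\<Sum>i\<in>A. f i) x = (\<Sum>i\<in>A. sc (f i) x)"
  by (induction A rule: infinite_finite_induct) (auto simp: sc_add_left)

lemma ip_zero_right[simp]: "ip x 0 = 0"
proof -
  have "ip x (0 + 0) = ip x 0 + ip x 0" by (rule ip_add_right)
  then show ?thesis by simp
qed

lemma ip_add_left: "ip (x + y) z = ip x z + ip y z"
  by (metis ip_sym ip_add_right complex_cnj_add)

lemma ip_sc_left: "ip (sc a x) y = cnj a * ip x y"
  by (metis ip_sym ip_sc_right complex_cnj_mult)

lemma ip_zero_left[simp]: "ip 0 x = 0"
  by (metis ip_sym ip_zero_right complex_cnj_zero)

lemma ip_minus_right: "ip x (- y) = - ip x y"
  using ip_add_right[of x y "- y"] by (simp add: eq_neg_iff_add_eq_0 add.commute)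

lemma ip_minus_left: "ip (- x) y = - ip x y"
  by (metis ip_sym ip_minus_right complex_cnj_minus)

lemma ip_diff_right: "ip x (y - z) = ip x y - ip x z"
  using ip_add_right[of x y "- z"] by (simp add: ip_minus_right)

lemma ip_diff_left: "ip (x - y) z = ip x z - ip y z"
  using ip_add_left[of x "- y" z] by (simp add: ip_minus_left)

lemma ip_sum_right: "ip x (\<Sum>i\<in>A. f i) = (\<Sum>i\<in>A. ip x (f i))"
  by (induction A rule: infinite_finite_induct) (auto simp: ip_add_right)

lemma ip_sum_left: "ip (\<Sum>i\<in>A. f i) x = (\<Sum>i\<in>A. ip (f i) x)"
  by (induction A rule: infinite_finite_induct) (auto simp: ip_add_left)

lemma ip_self_Im: "Im (ip x x) = 0"
proof -
  have "Im (ip x x) = - Im (ip x x)" using arg_cong[OF ip_sym[of x x], of Im] by simp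
  then show ?thesis by simp
qed

lemma ip_self_real: "ip x x = complex_of_real (Re (ip x x))"
  using ip_self_Im by (simp add: complex_eq_iff)

lemma ip_self_nonneg: "Re (ip x x) \<ge> 0"
proof (cases "x = 0")
  case True then show ?thesis by simp
next
  case False then show ?thesis using ip_pos[OF False] by simp
qed

lemma nrm_nonneg[simp]: "nrm x \<ge> 0"
  by (simp add: hnorm_def ip_self_nonneg)

lemma nrm_sq: "(nrm x)^2 = Re (ip x x)"
  by (simp add: hnorm_def ip_self_nonneg)

lemma nrm_zero_iff[simp]: "nrm x = 0 \<longleftrightarrow> x = 0"
proof
  assume "nrm x = 0"
  then have "Re (ip x x) = 0" using ip_self_nonneg[of x] by (simp add: hnorm_def)
  then show "x = 0" using ip_pos[of x] by (cases "x = 0") auto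
qed (simp add: hnorm_def)

lemma nrm_zero[simp]: "nrm 0 = 0"
  by simp

lemma nrm_sc: "nrm (sc a x) = cmod a * nrm x"
proof -
  have "Re (ip (sc a x) (sc a x)) = (cmod a)^2 * Re (ip x x)"
    using ip_self_real[of x]
    by (simp add: ip_sc_left ip_sc_right mult.assoc[symmetric] complex_norm_square[symmetric])
  then show ?thesis
    by (simp add: hnorm_def real_sqrt_mult)
qed

lemma nrm_minus: "nrm (- x) = nrm x"
  by (simp add: hnorm_def ip_minus_left ip_minus_right)

lemma nrm_diff_commute: "nrm (x - y) = nrm (y - x)"
  by (metis minus_diff_eq nrm_minus)

lemma cauchy_schwarz: "cmod (ip x y) \<le> nrm x * nrm y"
proof (cases "y = 0")
  case True then show ?thesis by simp
next
  case False
  define r where "r = Re (ip y y)"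
  have r: "r > 0" using ip_pos[OF False] by (simp add: r_def)
  have ryy: "ip y y = of_real r" using ip_self_real[of y] by (simp add: r_def)
  define w where "w = ip x y"
  have yx: "ip y x = cnj w" using ip_sym[of x y] by (simp add: w_def)
  define t where "t = cnj w / of_real r"
  have "ip (x - sc t y) (x - sc t y)
      = ip x x - t * w - cnj t * cnj w + cnj t * t * of_real r"
    by (simp add: ip_diff_left ip_diff_right ip_sc_left ip_sc_right w_def[symmetric] yx ryy
        algebra_simps)
  also have "\<dots> = ip x x - w * cnj w / of_real r"
    using r by (simp add: t_def field_simps)
  also have "\<dots> = ip x x - of_real ((cmod w)^2 / r)"
    using complex_norm_square[of w] by simp
  finally have "Re (ip x x) - (cmod w)^2 / r \<ge> 0"
    using ip_self_nonneg[of "x - sc t y"] by simp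
  then have "(cmod w)^2 \<le> Re (ip x x) * r" using r by (simp add: field_simps)
  also have "\<dots> = (nrm x * nrm y)^2" by (simp add: power_mult_distrib nrm_sq r_def)
  finally show ?thesis unfolding w_def
    by (rule power2_le_imp_le) simp
qed

lemma nrm_triangle: "nrm (x + y) \<le> nrm x + nrm y"
proof -
  have "Re (ip x y) \<le> nrm x * nrm y"
    using cauchy_schwarz[of x y] complex_Re_le_cmod order_trans by blast
  moreover have "Re (ip y x) = Re (ip x y)" using ip_sym[of x y] by simp
  ultimately have "(nrm (x + y))^2 = (nrm x)^2 + 2 * Re (ip x y) + (nrm y)^2"
    by (simp add: nrm_sq ip_add_left ip_add_right)
  moreover have "(nrm x + nrm y)^2 = (nrm x)^2 + 2 * (nrm x * nrm y) + (nrm y)^2"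
    by (simp add: power2_sum)
  ultimately have "(nrm (x + y))^2 \<le> (nrm x + nrm y)^2"
    using \<open>Re (ip x y) \<le> nrm x * nrm y\<close> by linarith
  then show ?thesis
    by (rule power2_le_imp_le) simp
qed

lemma nrm_diff_triangle: "nrm (x - y) \<le> nrm x + nrm y"
  using nrm_triangle[of x "- y"] by (simp add: nrm_minus)

lemma nrm_rev_triangle: "\<bar>nrm x - nrm y\<bar> \<le> nrm (x - y)"
proof -
  have "nrm x \<le> nrm (x - y) + nrm y" using nrm_triangle[of "x - y" y] by simp
  moreover have "nrm y \<le> nrm (x - y) + nrm x"
    using nrm_triangle[of "y - x" x] by (simp add: nrm_diff_commute)
  ultimately show ?thesis by linarith
qed

lemma nrm_sum: "nrm (\<Sum>i\<in>A. f i) \<le> (\<Sum>i\<in>A. nrm (f i))"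
proof (induction A rule: infinite_finite_induct)
  case (insert a A)
  then show ?case using nrm_triangle[of "f a" "sum f A"] by simp
qed auto

end

context chilbert
begin

definition htendsto :: "(nat \<Rightarrow> 'h) \<Rightarrow> 'h \<Rightarrow> bool" where
  "htendsto X L \<longleftrightarrow> (\<lambda>n. nrm (X n - L)) \<longlonglongrightarrow> 0"

lemma htendsto_null_comparison:
  assumes "\<And>n. nrm (X n - L) \<le> f n" "f \<longlonglongrightarrow> 0"
  shows "htendsto X L"
  unfolding htendsto_def by (rule Lim_null_comparison[OF _ assms(2)]) (simp add: assms(1))

lemma htendsto_unique: assumes "htendsto X L" "htendsto X M" shows "L = M"
proof -
  have "nrm (L - M) \<le> nrm (X n - L) + nrm (X n - M)" for n
    using nrm_diff_triangle[of "X n - M" "X n - L"] by simp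
  moreover have "(\<lambda>n. nrm (X n - L) + nrm (X n - M)) \<longlonglongrightarrow> 0"
    using assms tendsto_add[of _ 0 sequentially _ 0] unfolding htendsto_def by fastforce
  ultimately have "nrm (L - M) \<le> 0"
    by (intro tendsto_le[of sequentially _ 0 "\<lambda>_. nrm (L - M)"]) auto
  then show ?thesis using nrm_nonneg[of "L - M"] by simp
qed

lemma htendsto_const: "htendsto (\<lambda>n. x) x"
  by (simp add: htendsto_def)

lemma htendsto_add: assumes "htendsto X L" "htendsto Y M" shows "htendsto (\<lambda>n. X n + Y n) (L + M)"
proof (rule htendsto_null_comparison)
  show "nrm (X n + Y n - (L + M)) \<le> nrm (X n - L) + nrm (Y n - M)" for n
    using nrm_triangle[of "X n - L" "Y n - M"] by (simp add: algebra_simps)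
  show "(\<lambda>n. nrm (X n - L) + nrm (Y n - M)) \<longlonglongrightarrow> 0"
    using assms tendsto_add[of _ 0 sequentially _ 0] unfolding htendsto_def by fastforce
qed

lemma htendsto_sc: assumes "htendsto X L" shows "htendsto (\<lambda>n. sc a (X n)) (sc a L)"
proof (rule htendsto_null_comparison)
  show "nrm (sc a (X n) - sc a L) \<le> cmod a * nrm (X n - L)" for n
    by (simp add: sc_diff_right[symmetric] nrm_sc)
  show "(\<lambda>n. cmod a * nrm (X n - L)) \<longlonglongrightarrow> 0"
    using assms tendsto_mult_right_zero unfolding htendsto_def by blast
qed

lemma htendsto_Suc: assumes "htendsto X L" shows "htendsto (\<lambda>n. X (Suc n)) L"
  using assms unfolding htendsto_def by (rule LIMSEQ_Suc)

lemma htendsto_nrm: assumes "htendsto X L" shows "(\<lambda>n. nrm (X n)) \<longlonglongrightarrow> nrm L"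
proof -
  have "(\<lambda>n. nrm (X n) - nrm L) \<longlonglongrightarrow> 0"
    using assms unfolding htendsto_def by (rule Lim_null_comparison[rotated]) (simp add: nrm_rev_triangle)
  then show ?thesis by (simp add: LIM_zero_iff)
qed

lemma htendsto_ip_left: assumes "htendsto X L" shows "(\<lambda>n. ip (X n) y) \<longlonglongrightarrow> ip L y"
proof -
  have "(\<lambda>n. ip (X n) y - ip L y) \<longlonglongrightarrow> 0"
  proof (rule Lim_null_comparison[rotated])
    show "(\<lambda>n. nrm (X n - L) * nrm y) \<longlonglongrightarrow> 0"
      using assms tendsto_mult_left_zero unfolding htendsto_def by blast
    show "\<forall>\<^sub>F n in sequentially. norm (ip (X n) y - ip L y) \<le> nrm (X n - L) * nrm y"
      using cauchy_schwarz by (simp add: ip_diff_left[symmetric])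
  qed
  then show ?thesis by (simp add: LIM_zero_iff)
qed

lemma htendsto_ip_right: assumes "htendsto X L" shows "(\<lambda>n. ip y (X n)) \<longlonglongrightarrow> ip y L"
  using tendsto_cnj[OF htendsto_ip_left[OF assms, of y]] by (simp add: ip_sym[of y])

lemma htendsto_le: assumes "htendsto X L" "\<And>n. nrm (X n) \<le> c" shows "nrm L \<le> c"
  using htendsto_nrm[OF assms(1)] assms(2) by (intro tendsto_le[of sequentially "\<lambda>_. c"]) auto

lemma htendsto_Cauchy:
  assumes "\<And>e. e > 0 \<Longrightarrow> \<exists>N. \<forall>m\<ge>N. \<forall>n\<ge>N. nrm (X m - X n) < e"
  shows "\<exists>L. htendsto X L"
  using complete[of X] assms unfolding htendsto_def by blast

definition additive_op :: "('h \<Rightarrow> 'h) \<Rightarrow> bool" where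
  "additive_op T \<longleftrightarrow> (\<forall>x y. T (x + y) = T x + T y)"

definition bounded_by :: "('h \<Rightarrow> 'h) \<Rightarrow> real \<Rightarrow> bool" where
  "bounded_by T K \<longleftrightarrow> (\<forall>x. nrm (T x) \<le> K * nrm x)"

definition real_hom :: "('h \<Rightarrow> 'h) \<Rightarrow> bool" where
  "real_hom T \<longleftrightarrow> (\<forall>(r::real) x. T (sc (of_real r) x) = sc (of_real r) (T x))"

definition complex_hom :: "('h \<Rightarrow> 'h) \<Rightarrow> bool" where
  "complex_hom T \<longleftrightarrow> (\<forall>a x. T (sc a x) = sc a (T x))"

definition conj_hom :: "('h \<Rightarrow> 'h) \<Rightarrow> bool" where
  "conj_hom T \<longleftrightarrow> (\<forall>a x. T (sc a x) = sc (cnj a) (T x))"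

definition self_adjoint :: "('h \<Rightarrow> 'h) \<Rightarrow> bool" where
  "self_adjoint T \<longleftrightarrow> (\<forall>x y. ip (T x) y = ip x (T y))"

definition commute :: "('h \<Rightarrow> 'h) \<Rightarrow> ('h \<Rightarrow> 'h) \<Rightarrow> bool" where
  "commute B T \<longleftrightarrow> (\<forall>x. B (T x) = T (B x))"

definition real_bounded_op :: "('h \<Rightarrow> 'h) \<Rightarrow> bool" where
  "real_bounded_op B \<longleftrightarrow> additive_op B \<and> real_hom B \<and> (\<exists>K. bounded_by B K)"

lemma complex_hom_real_hom: "complex_hom T \<Longrightarrow> real_hom T"
  by (simp add: complex_hom_def real_hom_def)

lemma additive_op_zero: "additive_op T \<Longrightarrow> T 0 = 0"
  unfolding additive_op_def by (metis add_cancel_right_right add_0)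

lemma additive_op_minus: "additive_op T \<Longrightarrow> T (- x) = - T x"
  using additive_op_zero[of T] unfolding additive_op_def
  by (metis add.right_inverse eq_neg_iff_add_eq_0)

lemma additive_op_diff: "additive_op T \<Longrightarrow> T (x - y) = T x - T y"
  using additive_op_minus[of T y] unfolding additive_op_def by (metis diff_conv_add_uminus)

lemma additive_op_sum: "additive_op T \<Longrightarrow> T (\<Sum>i\<in>A. f i) = (\<Sum>i\<in>A. T (f i))"
  by (induction A rule: infinite_finite_induct) (auto simp: additive_op_zero additive_op_def)

lemma htendsto_bounded_op:
  assumes "additive_op T" "bounded_by T K" "htendsto X L"
  shows "htendsto (\<lambda>n. T (X n)) (T L)"
proof (rule htendsto_null_comparison)
  show "nrm (T (X n) - T L) \<le> K * nrm (X n - L)" for n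
    using assms(1,2) by (simp add: additive_op_diff[symmetric] bounded_by_def)
  show "(\<lambda>n. K * nrm (X n - L)) \<longlonglongrightarrow> 0"
    using assms(3) tendsto_mult_right_zero unfolding htendsto_def by blast
qed

end

section \<open>Strong limits and operator power series\<close>

context chilbert
begin

definition strongly_convergent :: "(nat \<Rightarrow> 'h \<Rightarrow> 'h) \<Rightarrow> bool" where
  "strongly_convergent F \<longleftrightarrow> (\<forall>x. \<exists>L. htendsto (\<lambda>n. F n x) L)"

definition strong_lim :: "(nat \<Rightarrow> 'h \<Rightarrow> 'h) \<Rightarrow> 'h \<Rightarrow> 'h" where
  "strong_lim F x = (SOME L. htendsto (\<lambda>n. F n x) L)"

lemma htendsto_strong_lim:
  "strongly_convergent F \<Longrightarrow> htendsto (\<lambda>n. F n x) (strong_lim F x)"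
  unfolding strongly_convergent_def strong_lim_def by (blast intro: someI_ex)

lemma strong_lim_eqI:
  "strongly_convergent F \<Longrightarrow> htendsto (\<lambda>n. F n x) L \<Longrightarrow> strong_lim F x = L"
  using htendsto_unique htendsto_strong_lim by blast

context
  fixes F :: "nat \<Rightarrow> 'h \<Rightarrow> 'h"
  assumes conv: "strongly_convergent F"
begin

lemma strong_lim_additive:
  assumes "\<And>n. additive_op (F n)" shows "additive_op (strong_lim F)"
  unfolding additive_op_def
proof (intro allI)
  fix x y
  have "htendsto (\<lambda>n. F n x + F n y) (strong_lim F x + strong_lim F y)"
    by (intro htendsto_add htendsto_strong_lim conv)
  then show "strong_lim F (x + y) = strong_lim F x + strong_lim F y"
    using assms by (intro strong_lim_eqI conv) (simp add: additive_op_def)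
qed

lemma strong_lim_complex_hom:
  assumes "\<And>n. complex_hom (F n)" shows "complex_hom (strong_lim F)"
  unfolding complex_hom_def
proof (intro allI)
  fix a x
  have "htendsto (\<lambda>n. sc a (F n x)) (sc a (strong_lim F x))"
    by (intro htendsto_sc htendsto_strong_lim conv)
  then show "strong_lim F (sc a x) = sc a (strong_lim F x)"
    using assms by (intro strong_lim_eqI conv) (simp add: complex_hom_def)
qed

lemma strong_lim_self_adjoint:
  assumes "\<And>n. self_adjoint (F n)" shows "self_adjoint (strong_lim F)"
  unfolding self_adjoint_def
proof (intro allI)
  fix x y
  have "(\<lambda>n. ip (F n x) y) \<longlonglongrightarrow> ip (strong_lim F x) y"
    by (intro htendsto_ip_left htendsto_strong_lim conv)
  moreover have "(\<lambda>n. ip x (F n y)) \<longlonglongrightarrow> ip x (strong_lim F y)"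
    by (intro htendsto_ip_right htendsto_strong_lim conv)
  ultimately show "ip (strong_lim F x) y = ip x (strong_lim F y)"
    using assms LIMSEQ_unique by (simp add: self_adjoint_def)
qed

lemma strong_lim_bounded_by:
  assumes "\<And>n. bounded_by (F n) K" shows "bounded_by (strong_lim F) K"
  using assms unfolding bounded_by_def by (blast intro: htendsto_le htendsto_strong_lim conv)

lemma strong_lim_commute:
  assumes "additive_op B" "bounded_by B K" "\<And>n. commute B (F n)"
  shows "commute B (strong_lim F)"
  unfolding commute_def
proof
  fix x
  have "htendsto (\<lambda>n. B (F n x)) (B (strong_lim F x))"
    by (intro htendsto_bounded_op[OF assms(1,2)] htendsto_strong_lim conv)
  then show "B (strong_lim F x) = strong_lim F (B x)"
    using assms(3) by (intro strong_lim_eqI[symmetric] conv) (simp add: commute_def)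
qed

lemma htendsto_apply_strong_lim:
  assumes "\<And>n. additive_op (F n)" "\<And>n. bounded_by (F n) K" "htendsto X L"
  shows "htendsto (\<lambda>n. F n (X n)) (strong_lim F L)"
proof (rule htendsto_null_comparison)
  fix n
  have "F n (X n) - strong_lim F L = F n (X n - L) + (F n L - strong_lim F L)"
    using additive_op_diff[OF assms(1)] by simp
  then show "nrm (F n (X n) - strong_lim F L) \<le> K * nrm (X n - L) + nrm (F n L - strong_lim F L)"
    using nrm_triangle assms(2) unfolding bounded_by_def by (metis add_right_mono order_trans)
next
  show "(\<lambda>n. K * nrm (X n - L) + nrm (F n L - strong_lim F L)) \<longlonglongrightarrow> 0"
    using assms(3) htendsto_strong_lim[OF conv, of L] unfolding htendsto_def
    by (intro tendsto_add_zero tendsto_mult_right_zero)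
qed

end

lemma additive_op_funpow: "additive_op T \<Longrightarrow> additive_op (T ^^ k)"
  by (induction k) (auto simp: additive_op_def)

lemma complex_hom_funpow: "complex_hom T \<Longrightarrow> complex_hom (T ^^ k)"
  by (induction k) (auto simp: complex_hom_def)

lemma self_adjoint_funpow: "self_adjoint T \<Longrightarrow> self_adjoint (T ^^ k)"
  by (induction k) (auto simp: self_adjoint_def funpow_swap1)

lemma commute_funpow: "commute B T \<Longrightarrow> commute B (T ^^ k)"
  by (induction k) (auto simp: commute_def)

lemma contraction_funpow: "bounded_by T 1 \<Longrightarrow> nrm ((T ^^ k) x) \<le> nrm x"
proof (induction k)
  case (Suc k)
  then show ?case unfolding bounded_by_def using order_trans by fastforce
qed simp

definition op_series :: "(nat \<Rightarrow> real) \<Rightarrow> ('h \<Rightarrow> 'h) \<Rightarrow> nat \<Rightarrow> 'h \<Rightarrow> 'h" where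
  "op_series c E n x = (\<Sum>k<n. sc (of_real (c k)) ((E ^^ k) x))"

lemma op_series_additive: "additive_op E \<Longrightarrow> additive_op (op_series c E n)"
  using additive_op_funpow[of E] unfolding additive_op_def op_series_def
  by (simp add: sc_add_right sum.distrib)

lemma op_series_complex_hom: "complex_hom E \<Longrightarrow> complex_hom (op_series c E n)"
  using complex_hom_funpow[of E] unfolding complex_hom_def op_series_def
  by (simp add: sc_sum_right sc_assoc mult.commute)

lemma op_series_self_adjoint: "self_adjoint E \<Longrightarrow> self_adjoint (op_series c E n)"
  using self_adjoint_funpow[of E] unfolding self_adjoint_def op_series_def
  by (simp add: ip_sum_left ip_sum_right ip_sc_left ip_sc_right)

lemma op_series_commute:
  "additive_op B \<Longrightarrow> real_hom B \<Longrightarrow> commute B E \<Longrightarrow> commute B (op_series c E n)"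
  using commute_funpow[of B E] unfolding commute_def op_series_def real_hom_def
  by (simp add: additive_op_sum)

lemma nrm_op_series_terms:
  assumes "bounded_by E 1"
  shows "nrm (\<Sum>k\<in>I. sc (of_real (c k)) ((E ^^ k) x)) \<le> (\<Sum>k\<in>I. \<bar>c k\<bar>) * nrm x"
proof -
  have "nrm (\<Sum>k\<in>I. sc (of_real (c k)) ((E ^^ k) x)) \<le> (\<Sum>k\<in>I. nrm (sc (of_real (c k)) ((E ^^ k) x)))"
    by (rule nrm_sum)
  also have "\<dots> \<le> (\<Sum>k\<in>I. \<bar>c k\<bar> * nrm x)"
    by (intro sum_mono) (simp add: nrm_sc mult_left_mono contraction_funpow[OF assms])
  finally show ?thesis by (simp add: sum_distrib_right)
qed

lemma op_series_bounded_by: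
  assumes "bounded_by E 1" "(\<Sum>k<n. \<bar>c k\<bar>) \<le> K" shows "bounded_by (op_series c E n) K"
  unfolding bounded_by_def op_series_def
  using nrm_op_series_terms[OF assms(1)] assms(2) by (meson mult_right_mono nrm_nonneg order_trans)

lemma op_series_strongly_convergent:
  assumes "bounded_by E 1" "summable (\<lambda>k. \<bar>c k\<bar>)"
  shows "strongly_convergent (op_series c E)"
  unfolding strongly_convergent_def
proof (intro allI htendsto_Cauchy)
  fix x and e :: real assume "e > 0"
  then have "e / (nrm x + 1) > 0" by (simp add: add_nonneg_pos)
  then obtain N where N: "\<And>m n. m \<ge> N \<Longrightarrow> (\<Sum>k\<in>{m..<n}. \<bar>c k\<bar>) < e / (nrm x + 1)"
    using assms(2) unfolding summable_Cauchy by fastforce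
  have close: "nrm (op_series c E q x - op_series c E p x) < e" if "N \<le> p" "p \<le> q" for p q
  proof -
    have "op_series c E q x - op_series c E p x = (\<Sum>k\<in>{p..<q}. sc (of_real (c k)) ((E ^^ k) x))"
      unfolding op_series_def lessThan_atLeast0 using \<open>p \<le> q\<close> by (simp add: sum_diff_nat_ivl)
    then have "nrm (op_series c E q x - op_series c E p x) \<le> (\<Sum>k\<in>{p..<q}. \<bar>c k\<bar>) * nrm x"
      using nrm_op_series_terms[OF assms(1)] by simp
    also have "\<dots> \<le> e / (nrm x + 1) * nrm x"
      using N[OF \<open>N \<le> p\<close>, of q] by (intro mult_right_mono) auto
    also have "\<dots> = e * (nrm x / (nrm x + 1))" by simp
    also have "\<dots> < e"
    proof -
      have "nrm x / (nrm x + 1) < 1" by (simp add: add_nonneg_pos)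
      from mult_strict_left_mono[OF this \<open>e > 0\<close>] show ?thesis by (simp only: mult_1_right)
    qed
    finally show ?thesis .
  qed
  show "\<exists>N. \<forall>m\<ge>N. \<forall>n\<ge>N. nrm (op_series c E m x - op_series c E n x) < e"
    using close nrm_diff_commute by (metis nat_le_linear)
qed

end

lemma tendsto_partial_sums_half:
  fixes f :: "nat \<Rightarrow> real"
  assumes "summable f"
  shows "(\<lambda>n. \<Sum>i<n div 2. f i) \<longlonglongrightarrow> suminf f"
proof -
  have "filterlim (\<lambda>n::nat. n div 2) sequentially sequentially"
    unfolding filterlim_at_top eventually_sequentially by (metis div_le_mono div_mult_self1_is_m zero_less_numeral)
  with summable_LIMSEQ[OF assms] show ?thesis by (rule filterlim_compose)
qed

context chilbert
begin

definition sqrt_one_plus :: "('h \<Rightarrow> 'h) \<Rightarrow> 'h \<Rightarrow> 'h" where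
  "sqrt_one_plus E = strong_lim (op_series sqrt_coeff E)"

lemma op_series_square:
  assumes "additive_op E" "complex_hom E"
  shows "op_series c E n (op_series c E n x)
           = (\<Sum>(i, j)\<in>{..<n} \<times> {..<n}. sc (of_real (c i * c j)) ((E ^^ (i + j)) x))"
  using additive_op_funpow[OF assms(1)] complex_hom_funpow[OF assms(2)]
  by (simp add: op_series_def additive_op_sum sc_sum_right complex_hom_def sc_assoc funpow_add
      mult.commute sum.cartesian_product)

lemma sqrt_series_triangle_sum:
  assumes "n \<ge> 2"
  shows "(\<Sum>(i, j)\<in>{(i, j). i + j < n}. sc (of_real (sqrt_coeff i * sqrt_coeff j)) ((E ^^ (i + j)) x))
           = x + E x"
proof -
  have "(\<Sum>(i, j)\<in>{(i, j). i + j < n}. sc (of_real (sqrt_coeff i * sqrt_coeff j)) ((E ^^ (i + j)) x))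
      = (\<Sum>k<n. \<Sum>i\<le>k. sc (of_real (sqrt_coeff i * sqrt_coeff (k - i))) ((E ^^ k) x))"
    by (subst sum.triangle_reindex) (auto intro!: sum.cong)
  also have "\<dots> = (\<Sum>k<n. sc (of_real (if k \<le> 1 then 1 else 0)) ((E ^^ k) x))"
    by (simp only: sc_sum_left[symmetric] of_real_sum[symmetric] sqrt_coeff_convolution)
  also have "\<dots> = (\<Sum>k<2. sc (of_real (if k \<le> 1 then 1 else 0)) ((E ^^ k) x))"
    using assms by (intro sum.mono_neutral_right) auto
  finally show ?thesis by (simp add: eval_nat_numeral sc_one add.commute)
qed

context
  fixes E :: "'h \<Rightarrow> 'h"
  assumes contraction: "bounded_by E 1"
begin

lemma sqrt_series_strongly_convergent: "strongly_convergent (op_series sqrt_coeff E)"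
  by (rule op_series_strongly_convergent[OF contraction summable_abs_sqrt_coeff])

lemma sqrt_series_bounded_by: "bounded_by (op_series sqrt_coeff E n) 2"
  by (rule op_series_bounded_by[OF contraction sum_abs_sqrt_coeff_le])

lemma sqrt_one_plus_additive: "additive_op E \<Longrightarrow> additive_op (sqrt_one_plus E)"
  unfolding sqrt_one_plus_def
  by (rule strong_lim_additive[OF sqrt_series_strongly_convergent op_series_additive])

lemma sqrt_one_plus_complex_hom: "complex_hom E \<Longrightarrow> complex_hom (sqrt_one_plus E)"
  unfolding sqrt_one_plus_def
  by (rule strong_lim_complex_hom[OF sqrt_series_strongly_convergent op_series_complex_hom])

lemma sqrt_one_plus_self_adjoint: "self_adjoint E \<Longrightarrow> self_adjoint (sqrt_one_plus E)"
  unfolding sqrt_one_plus_def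
  by (rule strong_lim_self_adjoint[OF sqrt_series_strongly_convergent op_series_self_adjoint])

lemma sqrt_one_plus_bounded_by: "bounded_by (sqrt_one_plus E) 2"
  unfolding sqrt_one_plus_def
  by (rule strong_lim_bounded_by[OF sqrt_series_strongly_convergent sqrt_series_bounded_by])

lemma sqrt_one_plus_commute:
  assumes "real_bounded_op B" "commute B E" shows "commute B (sqrt_one_plus E)"
  using assms strong_lim_commute[OF sqrt_series_strongly_convergent] op_series_commute
  unfolding sqrt_one_plus_def real_bounded_op_def by metis

text \<open>The terms of the square of the n-th partial sum not cancelled by the convolution
  identity lie outside the triangle i + j < n, hence outside the square of side n div 2.\<close>

lemma sqrt_series_square_error:
  assumes "additive_op E" "complex_hom E" "n \<ge> 2"
  defines "S \<equiv> \<lambda>n. \<Sum>i<n. \<bar>sqrt_coeff i\<bar>"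
  shows "nrm (op_series sqrt_coeff E n (op_series sqrt_coeff E n x) - (x + E x))
           \<le> (S n * S n - S (n div 2) * S (n div 2)) * nrm x"
proof -
  define g where "g = (\<lambda>(i, j). sc (of_real (sqrt_coeff i * sqrt_coeff j)) ((E ^^ (i + j)) x))"
  define G where "G = (\<lambda>(i, j). \<bar>sqrt_coeff i\<bar> * \<bar>sqrt_coeff j\<bar>)"
  define box where "box = {..<n} \<times> {..<n}"
  define tri where "tri = {(i, j). i + j < n}"
  define small where "small = {..<n div 2} \<times> {..<n div 2}"
  have "small \<subseteq> tri" "tri \<subseteq> box" "finite box" by (auto simp: small_def tri_def box_def)
  have "op_series sqrt_coeff E n (op_series sqrt_coeff E n x) - (x + E x) = sum g (box - tri)"
    using op_series_square[OF assms(1,2)] sqrt_series_triangle_sum[OF assms(3)]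
      sum_diff[OF \<open>finite box\<close> \<open>tri \<subseteq> box\<close>, of g]
    by (simp add: g_def box_def tri_def)
  also have "nrm \<dots> \<le> (\<Sum>p\<in>box - tri. nrm (g p))" by (rule nrm_sum)
  also have "\<dots> \<le> (\<Sum>p\<in>box - tri. G p * nrm x)"
    by (intro sum_mono) (auto simp: g_def G_def nrm_sc norm_mult mult_left_mono
        contraction_funpow[OF contraction])
  also have "\<dots> \<le> (\<Sum>p\<in>box - small. G p * nrm x)"
    using \<open>small \<subseteq> tri\<close> \<open>finite box\<close> by (intro sum_mono2) (auto simp: G_def)
  also have "\<dots> = (sum G box - sum G small) * nrm x"
    using \<open>small \<subseteq> tri\<close> \<open>tri \<subseteq> box\<close> \<open>finite box\<close>
    by (simp add: sum_distrib_right[symmetric] sum_diff)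
  also have "sum G box = S n * S n"
    by (simp add: S_def box_def G_def sum_product sum.cartesian_product)
  also have "sum G small = S (n div 2) * S (n div 2)"
    by (simp add: S_def small_def G_def sum_product sum.cartesian_product)
  finally show ?thesis .
qed

lemma sqrt_one_plus_squared:
  assumes "additive_op E" "complex_hom E"
  shows "sqrt_one_plus E (sqrt_one_plus E x) = x + E x"
proof -
  let ?F = "op_series sqrt_coeff E"
  define S where "S = (\<lambda>n. \<Sum>i<n. \<bar>sqrt_coeff i\<bar>)"
  have "htendsto (\<lambda>n. ?F n (?F n x)) (sqrt_one_plus E (sqrt_one_plus E x))"
    unfolding sqrt_one_plus_def
    by (rule htendsto_apply_strong_lim[OF sqrt_series_strongly_convergent
          op_series_additive[OF assms(1)] sqrt_series_bounded_by
          htendsto_strong_lim[OF sqrt_series_strongly_convergent]])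
  moreover have "htendsto (\<lambda>n. ?F n (?F n x)) (x + E x)"
    unfolding htendsto_def
  proof (rule Lim_null_comparison)
    show "\<forall>\<^sub>F n in sequentially. norm (nrm (?F n (?F n x) - (x + E x)))
            \<le> (S n * S n - S (n div 2) * S (n div 2)) * nrm x"
      unfolding eventually_sequentially S_def
      using sqrt_series_square_error[OF assms] by auto
    define s where "s = (\<Sum>i. \<bar>sqrt_coeff i\<bar>)"
    have "S \<longlonglongrightarrow> s" "(\<lambda>n. S (n div 2)) \<longlonglongrightarrow> s"
      unfolding S_def s_def using summable_LIMSEQ tendsto_partial_sums_half summable_abs_sqrt_coeff
      by blast+
    then have "(\<lambda>n. (S n * S n - S (n div 2) * S (n div 2)) * nrm x) \<longlonglongrightarrow> (s * s - s * s) * nrm x"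
      by (intro tendsto_intros)
    then show "(\<lambda>n. (S n * S n - S (n div 2) * S (n div 2)) * nrm x) \<longlonglongrightarrow> 0" by simp
  qed
  ultimately show ?thesis by (rule htendsto_unique)
qed

end

end

section \<open>Projection onto the kernel of a bounded self-adjoint operator\<close>

context chilbert
begin

lemma ip_funpow_self_adjoint:
  "self_adjoint T \<Longrightarrow> ip ((T ^^ p) x) ((T ^^ q) y) = ip x ((T ^^ (p + q)) y)"
  using self_adjoint_funpow[of T p] by (simp add: self_adjoint_def funpow_add)

text \<open>For a self-adjoint contraction M the numbers a k = |M^k x|^2 decrease, and
  |M^(2m) x - M^(2n) x|^2 = a (2m) + a (2n) - 2 a (m + n), so the even powers form a
  Cauchy sequence.\<close>

lemma even_powers_strongly_convergent:
  assumes "self_adjoint M" "bounded_by M 1"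
  shows "strongly_convergent (\<lambda>n. M ^^ (2 * n))"
  unfolding strongly_convergent_def
proof (intro allI htendsto_Cauchy)
  fix x and e :: real assume "e > 0"
  define a where "a = (\<lambda>k. (nrm ((M ^^ k) x))^2)"
  have a_ip: "Re (ip ((M ^^ p) x) ((M ^^ q) x)) = a ((p + q) div 2)" if "even (p + q)" for p q
  proof -
    have "p + q = (p + q) div 2 + (p + q) div 2" using that by presburger
    then show ?thesis
      unfolding a_def nrm_sq ip_funpow_self_adjoint[OF assms(1)] by metis
  qed
  have "decseq a"
    using assms(2) unfolding a_def bounded_by_def by (intro decseq_SucI power_mono) auto
  then obtain L where "a \<longlonglongrightarrow> L" using decseq_convergent[of a 0] by (auto simp: a_def)
  moreover have "e^2 / 4 > 0" using \<open>e > 0\<close> by simp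
  ultimately obtain N where N: "\<And>k. k \<ge> N \<Longrightarrow> \<bar>a k - L\<bar> < e^2 / 4"
    unfolding LIMSEQ_def dist_real_def by blast
  have "nrm ((M ^^ (2 * m)) x - (M ^^ (2 * n)) x) < e" if "m \<ge> N" "n \<ge> N" for m n
  proof -
    have "(nrm ((M ^^ (2 * m)) x - (M ^^ (2 * n)) x))^2 = a (2 * m) + a (2 * n) - 2 * a (m + n)"
      unfolding nrm_sq ip_diff_left ip_diff_right using a_ip[of "2 * m" "2 * m"] a_ip[of "2 * n" "2 * n"]
        a_ip[of "2 * m" "2 * n"] a_ip[of "2 * n" "2 * m"]
      by (simp add: add.commute mult_2[symmetric])
    also have "\<dots> < e^2"
      using N[of "2 * m"] N[of "2 * n"] N[of "m + n"] that unfolding abs_less_iff by simp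
    finally show ?thesis using \<open>e > 0\<close> by (simp add: power_less_imp_less_base)
  qed
  then show "\<exists>N. \<forall>m\<ge>N. \<forall>n\<ge>N. nrm ((M ^^ (2 * m)) x - (M ^^ (2 * n)) x) < e" by blast
qed

text \<open>With K a bound for Y, the step x - Y(Y x) / (K^2 + 1) is a self-adjoint contraction
  that fixes exactly the kernel of Y; its even powers converge strongly to the orthogonal
  projection onto that kernel.\<close>

definition kernel_step :: "('h \<Rightarrow> 'h) \<Rightarrow> real \<Rightarrow> 'h \<Rightarrow> 'h" where
  "kernel_step Y K x = x - sc (of_real (1 / (K^2 + 1))) (Y (Y x))"

definition kernel_proj :: "('h \<Rightarrow> 'h) \<Rightarrow> real \<Rightarrow> 'h \<Rightarrow> 'h" where
  "kernel_proj Y K = strong_lim (\<lambda>n. kernel_step Y K ^^ (2 * n))"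

lemma kernel_step_complex_hom: "complex_hom Y \<Longrightarrow> complex_hom (kernel_step Y K)"
  unfolding complex_hom_def kernel_step_def by (simp add: sc_diff_right sc_assoc mult.commute)

context
  fixes Y :: "'h \<Rightarrow> 'h" and K :: real
  assumes additive: "additive_op Y" and self_adjoint: "self_adjoint Y" and bounded: "bounded_by Y K"
begin

lemma kernel_step_additive: "additive_op (kernel_step Y K)"
  using additive unfolding additive_op_def kernel_step_def by (simp add: sc_add_right algebra_simps)

lemma kernel_step_self_adjoint: "self_adjoint (kernel_step Y K)"
  using self_adjoint unfolding self_adjoint_def kernel_step_def
  by (simp add: ip_diff_left ip_diff_right ip_sc_left ip_sc_right)

lemma nrm_kernel_step:
  "(nrm (kernel_step Y K x))^2 \<le> (nrm x)^2 - (nrm (Y x))^2 / (K^2 + 1)"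
proof -
  define c where "c = K^2 + 1"
  have c: "c > 0" unfolding c_def by (simp add: add_nonneg_pos)
  define D where "D = sc (of_real (1 / c)) (Y (Y x))"
  have "ip x D = of_real (1 / c) * ip (Y x) (Y x)" "ip D x = of_real (1 / c) * ip (Y x) (Y x)"
    using self_adjoint by (simp_all add: D_def ip_sc_left ip_sc_right self_adjoint_def)
  then have cross: "Re (ip x D) = (nrm (Y x))^2 / c" "Re (ip D x) = (nrm (Y x))^2 / c"
    by (simp_all add: nrm_sq)
  have "(nrm (Y (Y x)))^2 \<le> (K * nrm (Y x))^2"
    using bounded by (intro power_mono) (auto simp: bounded_by_def)
  also have "\<dots> = K^2 * (nrm (Y x))^2" by (simp add: power_mult_distrib)
  also have "\<dots> \<le> c * (nrm (Y x))^2" unfolding c_def by (intro mult_right_mono) auto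
  finally have YY: "(nrm (Y (Y x)))^2 \<le> c * (nrm (Y x))^2" .
  have "cmod (of_real (1 / c)) = 1 / c" using c by (simp add: norm_divide)
  then have "(nrm D)^2 = (nrm (Y (Y x)))^2 / c^2"
    unfolding D_def nrm_sc by (simp add: power_divide power_mult_distrib)
  also have "\<dots> \<le> c * (nrm (Y x))^2 / c^2" using YY by (intro divide_right_mono) auto
  also have "\<dots> = (nrm (Y x))^2 / c" using c by (simp add: power2_eq_square)
  finally have "(nrm D)^2 \<le> (nrm (Y x))^2 / c" .
  moreover have "kernel_step Y K x = x - D" by (simp add: kernel_step_def D_def c_def)
  then have "(nrm (kernel_step Y K x))^2 = (nrm x)^2 - Re (ip x D) - Re (ip D x) + (nrm D)^2"
    unfolding nrm_sq by (simp add: ip_diff_left ip_diff_right)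
  ultimately show ?thesis using cross by (simp add: c_def)
qed

lemma kernel_step_contraction: "bounded_by (kernel_step Y K) 1"
  unfolding bounded_by_def
proof
  fix x
  have "K^2 + 1 > 0" by (simp add: add_nonneg_pos)
  then have "(nrm (Y x))^2 / (K^2 + 1) \<ge> 0" by simp
  then have "(nrm (kernel_step Y K x))^2 \<le> (nrm x)^2" using nrm_kernel_step[of x] by linarith
  then have "nrm (kernel_step Y K x) \<le> nrm x" by (rule power2_le_imp_le) simp
  then show "nrm (kernel_step Y K x) \<le> 1 * nrm x" by simp
qed

lemma kernel_step_strongly_convergent: "strongly_convergent (\<lambda>n. kernel_step Y K ^^ (2 * n))"
  by (rule even_powers_strongly_convergent[OF kernel_step_self_adjoint kernel_step_contraction])

lemma kernel_proj_additive: "additive_op (kernel_proj Y K)"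
  unfolding kernel_proj_def
  by (rule strong_lim_additive[OF kernel_step_strongly_convergent additive_op_funpow[OF kernel_step_additive]])

lemma kernel_proj_complex_hom: "complex_hom Y \<Longrightarrow> complex_hom (kernel_proj Y K)"
  unfolding kernel_proj_def
  by (rule strong_lim_complex_hom[OF kernel_step_strongly_convergent complex_hom_funpow[OF kernel_step_complex_hom]])

lemma kernel_proj_self_adjoint: "self_adjoint (kernel_proj Y K)"
  unfolding kernel_proj_def
  by (rule strong_lim_self_adjoint[OF kernel_step_strongly_convergent self_adjoint_funpow[OF kernel_step_self_adjoint]])

lemma kernel_proj_commute:
  assumes "real_bounded_op B" "commute B Y" shows "commute B (kernel_proj Y K)"
proof -
  obtain K' where B: "additive_op B" "real_hom B" "bounded_by B K'"
    using assms(1) unfolding real_bounded_op_def by blast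
  have "commute B (kernel_step Y K)"
    unfolding commute_def kernel_step_def
    by (simp only: additive_op_diff[OF B(1)] B(2)[unfolded real_hom_def, rule_format]
        assms(2)[unfolded commute_def, rule_format] simp_thms)
  then show ?thesis unfolding kernel_proj_def
    by (intro strong_lim_commute[OF kernel_step_strongly_convergent B(1,3)] commute_funpow)
qed

lemma kernel_step_fixed_point: "kernel_step Y K (kernel_step Y K (kernel_proj Y K x)) = kernel_proj Y K x"
proof -
  let ?M = "kernel_step Y K"
  have "htendsto (\<lambda>n. ?M (?M ((?M ^^ (2 * n)) x))) (?M (?M (kernel_proj Y K x)))"
    unfolding kernel_proj_def
    by (intro htendsto_bounded_op[OF kernel_step_additive kernel_step_contraction]
        htendsto_strong_lim kernel_step_strongly_convergent)
  moreover have "htendsto (\<lambda>n. (?M ^^ (2 * Suc n)) x) (kernel_proj Y K x)"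
    unfolding kernel_proj_def
    by (intro htendsto_Suc[of "\<lambda>n. (?M ^^ (2 * n)) x"] htendsto_strong_lim kernel_step_strongly_convergent)
  ultimately show ?thesis by (simp add: htendsto_unique)
qed

lemma kernel_proj_in_kernel: "Y (kernel_proj Y K x) = 0"
proof -
  define z where "z = kernel_proj Y K x"
  have "(nrm (kernel_step Y K z))^2 \<le> (nrm z)^2 - (nrm (Y z))^2 / (K^2 + 1)"
    "(nrm z)^2 \<le> (nrm (kernel_step Y K z))^2 - (nrm (Y (kernel_step Y K z)))^2 / (K^2 + 1)"
    using nrm_kernel_step[of z] nrm_kernel_step[of "kernel_step Y K z"]
    by (simp_all add: kernel_step_fixed_point z_def)
  moreover have "K^2 + 1 > 0" by (simp add: add_nonneg_pos)
  then have "(nrm (Y (kernel_step Y K z)))^2 / (K^2 + 1) \<ge> 0" by simp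
  ultimately have "(nrm (Y z))^2 / (K^2 + 1) \<le> 0" by linarith
  with \<open>K^2 + 1 > 0\<close> have "(nrm (Y z))^2 \<le> 0" by (simp add: divide_le_0_iff)
  then show ?thesis by (simp add: z_def)
qed

lemma kernel_proj_fixes_kernel: assumes "Y z = 0" shows "kernel_proj Y K z = z"
proof -
  have "(kernel_step Y K ^^ k) z = z" for k
    by (induction k) (simp_all add: kernel_step_def assms additive_op_zero[OF additive])
  then show ?thesis unfolding kernel_proj_def
    by (intro strong_lim_eqI kernel_step_strongly_convergent) (simp add: htendsto_const)
qed

lemma kernel_proj_idem: "kernel_proj Y K (kernel_proj Y K x) = kernel_proj Y K x"
  by (rule kernel_proj_fixes_kernel[OF kernel_proj_in_kernel])

lemma annihilator_kernel_proj:
  assumes "additive_op T" "bounded_by T K'" "\<And>x. T (Y x) = 0" "complex_hom Y"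
  shows "T (kernel_proj Y K x) = T x"
proof -
  have "T (kernel_step Y K x) = T x" for x
  proof -
    have "kernel_step Y K x = x - Y (sc (of_real (1 / (K^2 + 1))) (Y x))"
      unfolding kernel_step_def by (simp only: assms(4)[unfolded complex_hom_def, rule_format])
    then show ?thesis by (simp add: assms(3) additive_op_diff[OF assms(1)])
  qed
  then have "T ((kernel_step Y K ^^ k) x) = T x" for k
    by (induction k) simp_all
  then have "htendsto (\<lambda>n. T ((kernel_step Y K ^^ (2 * n)) x)) (T x)" by (simp add: htendsto_const)
  moreover have "htendsto (\<lambda>n. T ((kernel_step Y K ^^ (2 * n)) x)) (T (kernel_proj Y K x))"
    unfolding kernel_proj_def
    by (intro htendsto_bounded_op[OF assms(1,2)] htendsto_strong_lim kernel_step_strongly_convergent)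
  ultimately show ?thesis by (simp add: htendsto_unique)
qed

end

end

section \<open>The square root of a unitary operator\<close>

context chilbert
begin

lemma sc_half_double: "sc (1/2) x + sc (1/2) x = x"
  using sc_add_left[of "1/2" "1/2" x, symmetric] by (simp add: sc_one)

lemma add_sc_half_diff: "x + sc (1/2) (v - x) = sc (1/2) (x + v)"
proof -
  have "x + sc (1/2) (v - x) = (sc (1/2) x + sc (1/2) x) + (sc (1/2) v - sc (1/2) x)"
    by (simp only: sc_half_double sc_diff_right)
  also have "\<dots> = sc (1/2) (x + v)" by (simp add: sc_add_right)
  finally show ?thesis .
qed

lemma sc_ii: "sc \<i> (sc \<i> x) = - x"
  by (simp add: sc_assoc sc_minus_left sc_one)

lemma sc_two: "sc 2 x = x + x"
  using sc_add_left[of 1 1 x] by (simp add: sc_one)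

lemma real_hom_sc: "real_hom B \<Longrightarrow> B (sc (of_real r) x) = sc (of_real r) (B x)"
  unfolding real_hom_def by blast

lemma real_hom_half: "real_hom B \<Longrightarrow> B (sc (1/2) x) = sc (1/2) (B x)"
  using real_hom_sc[of B "1/2" x] by simp

lemma real_hom_two: "real_hom B \<Longrightarrow> B (sc 2 x) = sc 2 (B x)"
  using real_hom_sc[of B 2 x] by simp

lemma commute_sym: "commute B T \<Longrightarrow> commute T B"
  by (simp add: commute_def)

lemma commute_refl: "commute B B"
  by (simp add: commute_def)

lemma real_bounded_opI: "additive_op B \<Longrightarrow> real_hom B \<Longrightarrow> bounded_by B K \<Longrightarrow> real_bounded_op B"
  unfolding real_bounded_op_def by blast

lemma unitary_op_real_bounded: "unitary_op sc ip B \<Longrightarrow> real_bounded_op B"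
  unfolding unitary_op_def
  by (intro real_bounded_opI[where K=1]) (simp_all add: additive_op_def real_hom_def bounded_by_def hnorm_def)

lemma antiunitary_op_real_bounded: "antiunitary_op sc ip B \<Longrightarrow> real_bounded_op B"
  unfolding antiunitary_op_def
  by (intro real_bounded_opI[where K=1]) (simp_all add: additive_op_def real_hom_def bounded_by_def hnorm_def)

end

locale unitary_sqrt = chilbert sc ip
  for sc :: "complex \<Rightarrow> 'h::ab_group_add \<Rightarrow> 'h" and ip +
  fixes A :: "'h \<Rightarrow> 'h"
  assumes unitary: "unitary_op sc ip A"
begin

definition Ainv :: "'h \<Rightarrow> 'h" where
  "Ainv = inv_into UNIV A"

lemma A_additive: "A (x + y) = A x + A y"
  and A_sc: "A (sc a x) = sc a (A x)"
  and ip_A: "ip (A x) (A y) = ip x y"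
  using unitary unfolding unitary_op_def by auto

lemma A_Ainv: "A (Ainv x) = x" and Ainv_A: "Ainv (A x) = x"
  using unitary unfolding unitary_op_def Ainv_def
  by (simp_all add: bij_is_surj bij_is_inj surj_f_inv_f inv_into_f_f)

lemma Ainv_eqI: "A y = x \<Longrightarrow> Ainv x = y"
  using Ainv_A by blast

lemma Ainv_additive: "Ainv (x + y) = Ainv x + Ainv y"
  by (rule Ainv_eqI) (simp add: A_additive A_Ainv)

lemma Ainv_sc: "Ainv (sc a x) = sc a (Ainv x)"
  by (rule Ainv_eqI) (simp add: A_sc A_Ainv)

lemma ip_A_left: "ip (A x) y = ip x (Ainv y)"
  using ip_A[of x "Ainv y"] by (simp add: A_Ainv)

lemma ip_Ainv_left: "ip (Ainv x) y = ip x (A y)"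
  using ip_A[of "Ainv x" y] by (simp add: A_Ainv)

lemma nrm_A: "nrm (A x) = nrm x" and nrm_Ainv: "nrm (Ainv x) = nrm x"
  by (simp_all add: hnorm_def ip_A_left ip_Ainv_left A_Ainv Ainv_A)

lemma A_additive_op: "additive_op A" and Ainv_additive_op: "additive_op Ainv"
  and A_complex_hom: "complex_hom A" and Ainv_complex_hom: "complex_hom Ainv"
  by (simp_all add: additive_op_def complex_hom_def A_additive Ainv_additive A_sc Ainv_sc)

lemma commute_A_Ainv: "commute A Ainv"
  by (simp add: commute_def A_Ainv Ainv_eqI)

lemma commute_Ainv: "commute B A \<Longrightarrow> commute B Ainv"
  unfolding commute_def by (metis A_Ainv Ainv_eqI)

definition cos_op :: "'h \<Rightarrow> 'h" where
  "cos_op x = sc (1/2) (A x + Ainv x)"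

definition sin_op :: "'h \<Rightarrow> 'h" where
  "sin_op x = sc (- \<i>/2) (A x - Ainv x)"

lemma cos_op_additive: "additive_op cos_op"
  unfolding additive_op_def cos_op_def by (simp add: A_additive Ainv_additive sc_add_right algebra_simps)

lemma sin_op_additive: "additive_op sin_op"
  unfolding additive_op_def sin_op_def
  by (simp add: A_additive Ainv_additive sc_add_right sc_diff_right algebra_simps)

lemma cos_op_complex_hom: "complex_hom cos_op"
  unfolding complex_hom_def cos_op_def by (simp add: A_sc Ainv_sc sc_add_right sc_assoc mult.commute)

lemma sin_op_complex_hom: "complex_hom sin_op"
  unfolding complex_hom_def sin_op_def by (simp add: A_sc Ainv_sc sc_diff_right sc_assoc mult.commute)

lemma cos_op_self_adjoint: "self_adjoint cos_op"
  unfolding self_adjoint_def cos_op_def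
  by (simp add: ip_sc_left ip_sc_right ip_add_left ip_add_right ip_A_left ip_Ainv_left add.commute)

lemma sin_op_self_adjoint: "self_adjoint sin_op"
  unfolding self_adjoint_def sin_op_def
  by (simp add: ip_sc_left ip_sc_right ip_diff_left ip_diff_right ip_A_left ip_Ainv_left algebra_simps)

lemma cos_op_contraction: "bounded_by cos_op 1"
  unfolding bounded_by_def
proof
  fix x
  have "nrm (cos_op x) = 1/2 * nrm (A x + Ainv x)" by (simp add: cos_op_def nrm_sc)
  also have "\<dots> \<le> 1/2 * (nrm (A x) + nrm (Ainv x))" using nrm_triangle by simp
  finally show "nrm (cos_op x) \<le> 1 * nrm x" by (simp add: nrm_A nrm_Ainv)
qed

lemma sin_op_contraction: "bounded_by sin_op 1"
  unfolding bounded_by_def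
proof
  fix x
  have "nrm (sin_op x) = 1/2 * nrm (A x - Ainv x)" by (simp add: sin_op_def nrm_sc norm_divide)
  also have "\<dots> \<le> 1/2 * (nrm (A x) + nrm (Ainv x))" using nrm_diff_triangle by simp
  finally show "nrm (sin_op x) \<le> 1 * nrm x" by (simp add: nrm_A nrm_Ainv)
qed

lemma cos_op_real_bounded: "real_bounded_op cos_op"
  by (rule real_bounded_opI[OF cos_op_additive complex_hom_real_hom[OF cos_op_complex_hom] cos_op_contraction])

lemma sin_op_real_bounded: "real_bounded_op sin_op"
  by (rule real_bounded_opI[OF sin_op_additive complex_hom_real_hom[OF sin_op_complex_hom] sin_op_contraction])

lemma i_sin_op: "sc \<i> (sin_op x) = sc (1/2) (A x - Ainv x)"
  by (simp add: sin_op_def sc_assoc)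

lemma A_cos_sin: "A x = cos_op x + sc \<i> (sin_op x)"
proof -
  have "cos_op x + sc \<i> (sin_op x) = sc (1/2) ((A x + Ainv x) + (A x - Ainv x))"
    unfolding cos_op_def i_sin_op by (rule sc_add_right[symmetric])
  also have "(A x + Ainv x) + (A x - Ainv x) = A x + A x" by simp
  finally show ?thesis by (simp add: sc_add_right sc_half_double)
qed

lemma Ainv_cos_sin: "Ainv x = cos_op x - sc \<i> (sin_op x)"
proof -
  have "cos_op x - sc \<i> (sin_op x) = sc (1/2) ((A x + Ainv x) - (A x - Ainv x))"
    unfolding cos_op_def i_sin_op by (rule sc_diff_right[symmetric])
  also have "(A x + Ainv x) - (A x - Ainv x) = Ainv x + Ainv x" by simp
  finally show ?thesis by (simp add: sc_add_right sc_half_double)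
qed

lemma commute_cos_sin_op:
  assumes "additive_op B" "complex_hom B" "commute B A"
  shows "commute B cos_op" "commute B sin_op"
proof -
  have Ba: "B (x + y) = B x + B y" and Bd: "B (x - y) = B x - B y"
    and Bs: "B (sc a x) = sc a (B x)" for x y a
    using assms(1,2) additive_op_diff[OF assms(1)] by (auto simp: additive_op_def complex_hom_def)
  have BA: "B (A x) = A (B x)" "B (Ainv x) = Ainv (B x)" for x
    using assms(3) commute_Ainv[OF assms(3)] by (auto simp: commute_def)
  show "commute B cos_op" "commute B sin_op"
    unfolding commute_def cos_op_def sin_op_def by (simp_all add: Ba Bd Bs BA)
qed

lemma conj_commute_cos_sin_op:
  assumes "additive_op J" "conj_hom J" "\<And>x. J (A x) = Ainv (J x)"
  shows "commute J cos_op" "commute J sin_op"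
proof -
  have JAinv: "J (Ainv x) = A (J x)" for x
  proof -
    have "Ainv (J (Ainv x)) = J x" using assms(3)[of "Ainv x"] by (simp add: A_Ainv)
    then have "A (Ainv (J (Ainv x))) = A (J x)" by simp
    then show ?thesis by (simp add: A_Ainv)
  qed
  have Ja: "J (x + y) = J x + J y" and Jd: "J (x - y) = J x - J y"
    and Js: "J (sc a x) = sc (cnj a) (J x)" for x y a
    using assms(1,2) additive_op_diff[OF assms(1)] by (auto simp: additive_op_def conj_hom_def)
  show "commute J cos_op" unfolding commute_def cos_op_def by (simp add: Js Ja assms(3) JAinv add.commute)
  show "commute J sin_op" unfolding commute_def
  proof
    fix x
    have "J (sin_op x) = sc (\<i>/2) (Ainv (J x) - A (J x))" by (simp add: sin_op_def Js Jd assms(3) JAinv)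
    also have "\<dots> = sc (- \<i>/2) (A (J x) - Ainv (J x))"
      by (metis minus_diff_eq minus_divide_left sc_minus_left sc_minus_right)
    finally show "J (sin_op x) = sin_op (J x)" by (simp add: sin_op_def)
  qed
qed

lemma commute_sin_cos_op: "commute sin_op cos_op"
proof -
  have "commute A sin_op" "commute Ainv sin_op"
    using commute_cos_sin_op(2)[OF A_additive_op A_complex_hom commute_refl]
      commute_cos_sin_op(2)[OF Ainv_additive_op Ainv_complex_hom commute_sym[OF commute_A_Ainv]]
    by simp_all
  then show ?thesis
    using commute_cos_sin_op(1)[OF sin_op_additive sin_op_complex_hom] commute_sym by blast
qed

lemma cos_sq_plus_sin_sq: "cos_op (cos_op x) + sin_op (sin_op x) = x"
proof -
  have Cd: "cos_op (x - y) = cos_op x - cos_op y" "sin_op (x - y) = sin_op x - sin_op y" for x y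
    using additive_op_diff[OF cos_op_additive] additive_op_diff[OF sin_op_additive] by auto
  have Cs: "cos_op (sc a x) = sc a (cos_op x)" "sin_op (sc a x) = sc a (sin_op x)" for a x
    using cos_op_complex_hom sin_op_complex_hom by (auto simp: complex_hom_def)
  have CS: "cos_op (sin_op x) = sin_op (cos_op x)" for x
    using commute_sin_cos_op by (simp add: commute_def)
  have "x = A (Ainv x)" by (simp add: A_Ainv)
  also have "\<dots> = cos_op (cos_op x - sc \<i> (sin_op x)) + sc \<i> (sin_op (cos_op x - sc \<i> (sin_op x)))"
    unfolding Ainv_cos_sin[of x] by (rule A_cos_sin)
  also have "\<dots> = cos_op (cos_op x) - sc \<i> (sin_op (cos_op x)) + (sc \<i> (sin_op (cos_op x)) - sc \<i> (sc \<i> (sin_op (sin_op x))))"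
    by (simp add: Cd Cs CS sc_diff_right)
  also have "\<dots> = cos_op (cos_op x) + sin_op (sin_op x)" by (simp add: sc_ii)
  finally show ?thesis by simp
qed

end

context unitary_sqrt
begin

text \<open>For s = 1 and s = -1, one plus this operator is (1 + s cos \<theta>) / 2, the square of
  cos(\<theta>/2) resp. sin(\<theta>/2).\<close>

definition cos_shift :: "real \<Rightarrow> 'h \<Rightarrow> 'h" where
  "cos_shift s x = sc (1/2) (sc (of_real s) (cos_op x) - x)"

definition half_angle :: "real \<Rightarrow> 'h \<Rightarrow> 'h" where
  "half_angle s = sqrt_one_plus (cos_shift s)"

abbreviation cos_half :: "'h \<Rightarrow> 'h" where
  "cos_half \<equiv> half_angle 1"

abbreviation abs_sin_half :: "'h \<Rightarrow> 'h" where
  "abs_sin_half \<equiv> half_angle (-1)"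

lemma cos_shift_additive: "additive_op (cos_shift s)"
  using cos_op_additive unfolding additive_op_def cos_shift_def
  by (simp add: sc_add_right sc_diff_right algebra_simps)

lemma cos_shift_complex_hom: "complex_hom (cos_shift s)"
  using cos_op_complex_hom unfolding complex_hom_def cos_shift_def
  by (simp add: sc_diff_right sc_assoc mult.commute)

lemma cos_shift_self_adjoint: "self_adjoint (cos_shift s)"
  using cos_op_self_adjoint unfolding self_adjoint_def cos_shift_def
  by (simp add: ip_diff_left ip_diff_right ip_sc_left ip_sc_right)

lemma cos_shift_contraction: assumes "\<bar>s\<bar> \<le> 1" shows "bounded_by (cos_shift s) 1"
  unfolding bounded_by_def
proof
  fix x
  have "\<bar>s\<bar> * nrm (cos_op x) \<le> 1 * nrm x"
    using assms cos_op_contraction by (intro mult_mono) (auto simp: bounded_by_def)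
  moreover have "nrm (sc (of_real s) (cos_op x) - x) \<le> \<bar>s\<bar> * nrm (cos_op x) + nrm x"
    using nrm_diff_triangle[of "sc (of_real s) (cos_op x)" x] by (simp add: nrm_sc)
  moreover have "nrm (cos_shift s x) = 1/2 * nrm (sc (of_real s) (cos_op x) - x)"
    by (simp add: cos_shift_def nrm_sc)
  ultimately show "nrm (cos_shift s x) \<le> 1 * nrm x" by linarith
qed

lemma cos_shift_commute:
  assumes "real_bounded_op B" "commute B cos_op" shows "commute B (cos_shift s)"
  using assms additive_op_diff[of B] real_hom_sc[of B] real_hom_half[of B]
  unfolding commute_def cos_shift_def real_bounded_op_def by simp

context
  fixes s :: real
  assumes s: "\<bar>s\<bar> \<le> 1"
begin

lemma half_angle_additive: "additive_op (half_angle s)"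
  unfolding half_angle_def
  by (rule sqrt_one_plus_additive[OF cos_shift_contraction[OF s] cos_shift_additive])

lemma half_angle_complex_hom: "complex_hom (half_angle s)"
  unfolding half_angle_def
  by (rule sqrt_one_plus_complex_hom[OF cos_shift_contraction[OF s] cos_shift_complex_hom])

lemma half_angle_self_adjoint: "self_adjoint (half_angle s)"
  unfolding half_angle_def
  by (rule sqrt_one_plus_self_adjoint[OF cos_shift_contraction[OF s] cos_shift_self_adjoint])

lemma half_angle_bounded_by: "bounded_by (half_angle s) 2"
  unfolding half_angle_def by (rule sqrt_one_plus_bounded_by[OF cos_shift_contraction[OF s]])

lemma half_angle_real_bounded: "real_bounded_op (half_angle s)"
  by (rule real_bounded_opI[OF half_angle_additive complex_hom_real_hom[OF half_angle_complex_hom]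
        half_angle_bounded_by])

lemma half_angle_commute:
  assumes "real_bounded_op B" "commute B cos_op" shows "commute B (half_angle s)"
  unfolding half_angle_def
  by (rule sqrt_one_plus_commute[OF cos_shift_contraction[OF s] assms(1) cos_shift_commute[OF assms]])

lemma half_angle_squared: "half_angle s (half_angle s x) = sc (1/2) (x + sc (of_real s) (cos_op x))"
  unfolding half_angle_def
  using sqrt_one_plus_squared[OF cos_shift_contraction[OF s] cos_shift_additive cos_shift_complex_hom]
  by (simp add: cos_shift_def add_sc_half_diff)

end

lemma cos_half_squared: "cos_half (cos_half x) = sc (1/2) (x + cos_op x)"
  using half_angle_squared[of 1] by (simp add: sc_one)

lemma abs_sin_half_squared: "abs_sin_half (abs_sin_half x) = sc (1/2) (x - cos_op x)"
  using half_angle_squared[of "-1"] by (simp add: sc_one sc_minus_left)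

lemma commute_half_angles: "commute (half_angle s) (half_angle t)" if "\<bar>s\<bar> \<le> 1" "\<bar>t\<bar> \<le> 1"
  using half_angle_commute[OF that(2) half_angle_real_bounded[OF that(1)]]
    half_angle_commute[OF that(1) cos_op_real_bounded commute_refl] commute_sym
  by blast

definition abs_sin_op :: "'h \<Rightarrow> 'h" where
  "abs_sin_op x = sc 2 (cos_half (abs_sin_half x))"

lemma abs_sin_op_additive: "additive_op abs_sin_op"
  using half_angle_additive[of 1] half_angle_additive[of "-1"]
  unfolding additive_op_def abs_sin_op_def by (simp add: sc_add_right)

lemma abs_sin_op_complex_hom: "complex_hom abs_sin_op"
  using half_angle_complex_hom[of 1] half_angle_complex_hom[of "-1"]
  unfolding complex_hom_def abs_sin_op_def by (simp add: sc_assoc mult.commute)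

lemma abs_sin_op_self_adjoint: "self_adjoint abs_sin_op"
  using half_angle_self_adjoint[of 1] half_angle_self_adjoint[of "-1"] commute_half_angles[of 1 "-1"]
  unfolding self_adjoint_def abs_sin_op_def commute_def by (simp add: ip_sc_left ip_sc_right)

lemma abs_sin_op_bounded_by: "bounded_by abs_sin_op 8"
  unfolding bounded_by_def
proof
  fix x
  have "nrm (abs_sin_op x) = 2 * nrm (cos_half (abs_sin_half x))" by (simp add: abs_sin_op_def nrm_sc)
  also have "\<dots> \<le> 2 * (2 * nrm (abs_sin_half x))"
    using half_angle_bounded_by[of 1] by (simp add: bounded_by_def)
  also have "\<dots> \<le> 2 * (2 * (2 * nrm x))"
    using half_angle_bounded_by[of "-1"] by (simp add: bounded_by_def)
  finally show "nrm (abs_sin_op x) \<le> 8 * nrm x" by simp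
qed

lemma abs_sin_op_real_bounded: "real_bounded_op abs_sin_op"
  by (rule real_bounded_opI[OF abs_sin_op_additive complex_hom_real_hom[OF abs_sin_op_complex_hom]
        abs_sin_op_bounded_by])

lemma abs_sin_op_commute:
  assumes "real_bounded_op B" "commute B cos_op" shows "commute B abs_sin_op"
  using half_angle_commute[of 1 B] half_angle_commute[of "-1" B] assms real_hom_two[of B]
  unfolding commute_def abs_sin_op_def real_bounded_op_def by simp

lemma abs_sin_op_squared: "abs_sin_op (abs_sin_op x) = sin_op (sin_op x)"
proof -
  have Cd: "cos_op (x - y) = cos_op x - cos_op y" for x y
    using additive_op_diff[OF cos_op_additive] .
  have Cs: "cos_op (sc a x) = sc a (cos_op x)" for a x
    using cos_op_complex_hom by (simp add: complex_hom_def)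
  have H: "half_angle s (sc a x) = sc a (half_angle s x)" if "\<bar>s\<bar> \<le> 1" for s a x
    using half_angle_complex_hom[OF that] by (simp add: complex_hom_def)
  have HH: "cos_half (abs_sin_half x) = abs_sin_half (cos_half x)" for x
    using commute_half_angles[of 1 "-1"] by (simp add: commute_def)
  define q where "q = abs_sin_half (abs_sin_half x)"
  have "abs_sin_op (abs_sin_op x) = sc 2 (sc 2 (cos_half (cos_half q)))"
    by (simp add: abs_sin_op_def H HH q_def)
  also have "cos_half (cos_half q) = sc (1/2) (q + cos_op q)" by (rule cos_half_squared)
  also have "q + cos_op q = sc (1/2) (x - cos_op (cos_op x))"
    by (simp add: q_def abs_sin_half_squared Cd Cs sc_diff_right)
  also have "x - cos_op (cos_op x) = sin_op (sin_op x)"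
    using cos_sq_plus_sin_sq[of x] by (metis add_diff_cancel_left')
  finally show ?thesis by (simp add: sc_assoc sc_one)
qed

end

context unitary_sqrt
begin

text \<open>The kernel of |sin \<theta>| - sin \<theta> is the spectral subspace where sin \<theta> \<ge> 0, i.e.
  where the sign of sin(\<theta>/2) is +1 for the branch \<theta> \<in> (-\<pi>, \<pi>].\<close>

definition sin_neg_part :: "'h \<Rightarrow> 'h" where
  "sin_neg_part x = abs_sin_op x - sin_op x"

definition sin_nonneg_proj :: "'h \<Rightarrow> 'h" where
  "sin_nonneg_proj = kernel_proj sin_neg_part 9"

definition sin_sign :: "'h \<Rightarrow> 'h" where
  "sin_sign x = sc 2 (sin_nonneg_proj x) - x"

definition sin_half :: "'h \<Rightarrow> 'h" where
  "sin_half x = sin_sign (abs_sin_half x)"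

lemma sin_neg_part_additive: "additive_op sin_neg_part"
  using abs_sin_op_additive sin_op_additive
  unfolding additive_op_def sin_neg_part_def by (simp add: algebra_simps)

lemma sin_neg_part_complex_hom: "complex_hom sin_neg_part"
  using abs_sin_op_complex_hom sin_op_complex_hom
  unfolding complex_hom_def sin_neg_part_def by (simp add: sc_diff_right)

lemma sin_neg_part_self_adjoint: "self_adjoint sin_neg_part"
  using abs_sin_op_self_adjoint sin_op_self_adjoint
  unfolding self_adjoint_def sin_neg_part_def by (simp add: ip_diff_left ip_diff_right)

lemma sin_neg_part_bounded_by: "bounded_by sin_neg_part 9"
  unfolding bounded_by_def
proof
  fix x
  have "nrm (sin_neg_part x) \<le> nrm (abs_sin_op x) + nrm (sin_op x)"
    unfolding sin_neg_part_def by (rule nrm_diff_triangle)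
  also have "\<dots> \<le> 8 * nrm x + 1 * nrm x"
    using abs_sin_op_bounded_by sin_op_contraction unfolding bounded_by_def by (intro add_mono) auto
  finally show "nrm (sin_neg_part x) \<le> 9 * nrm x" by simp
qed

lemma commute_sin_op_abs_sin_op: "commute sin_op abs_sin_op"
  by (rule abs_sin_op_commute[OF sin_op_real_bounded commute_sin_cos_op])

lemma sin_nonneg_proj_in_kernel: "abs_sin_op (sin_nonneg_proj x) = sin_op (sin_nonneg_proj x)"
  using kernel_proj_in_kernel[OF sin_neg_part_additive sin_neg_part_self_adjoint sin_neg_part_bounded_by]
  by (simp add: sin_nonneg_proj_def sin_neg_part_def)

text \<open>|sin \<theta>| + sin \<theta> annihilates the range of |sin \<theta>| - sin \<theta>, because |sin \<theta>|^2 = sin^2 \<theta>.\<close>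

lemma sin_nonneg_proj_abs_sin_plus_sin:
  "abs_sin_op (sin_nonneg_proj x) + sin_op (sin_nonneg_proj x) = abs_sin_op x + sin_op x"
proof -
  define T where "T = (\<lambda>x. abs_sin_op x + sin_op x)"
  have T_additive: "additive_op T"
    using abs_sin_op_additive sin_op_additive unfolding additive_op_def T_def by (simp add: algebra_simps)
  moreover have T_bounded: "bounded_by T 9"
    unfolding bounded_by_def
  proof
    fix x
    have "nrm (T x) \<le> nrm (abs_sin_op x) + nrm (sin_op x)" unfolding T_def by (rule nrm_triangle)
    also have "\<dots> \<le> 8 * nrm x + 1 * nrm x"
      using abs_sin_op_bounded_by sin_op_contraction unfolding bounded_by_def by (intro add_mono) auto
    finally show "nrm (T x) \<le> 9 * nrm x" by simp
  qed
  moreover have T_annihilates: "T (sin_neg_part x) = 0" for x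
    using commute_sin_op_abs_sin_op abs_sin_op_squared
      additive_op_diff[OF abs_sin_op_additive] additive_op_diff[OF sin_op_additive]
    by (simp add: T_def sin_neg_part_def commute_def)
  ultimately show ?thesis
    using annihilator_kernel_proj[OF sin_neg_part_additive sin_neg_part_self_adjoint
        sin_neg_part_bounded_by T_additive T_bounded T_annihilates sin_neg_part_complex_hom]
    by (simp add: T_def sin_nonneg_proj_def)
qed

lemma sin_nonneg_proj_commute:
  assumes "real_bounded_op B" "commute B cos_op" "commute B sin_op"
  shows "commute B sin_nonneg_proj"
proof -
  have "commute B sin_neg_part"
    using assms abs_sin_op_commute[OF assms(1,2)] additive_op_diff[of B]
    unfolding commute_def sin_neg_part_def real_bounded_op_def by simp
  then show ?thesis unfolding sin_nonneg_proj_def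
    by (rule kernel_proj_commute[OF sin_neg_part_additive sin_neg_part_self_adjoint
          sin_neg_part_bounded_by assms(1)])
qed

lemma sin_sign_commute:
  assumes "real_bounded_op B" "commute B cos_op" "commute B sin_op"
  shows "commute B sin_sign"
  using sin_nonneg_proj_commute[OF assms] assms(1) additive_op_diff[of B] real_hom_two[of B]
  unfolding commute_def sin_sign_def real_bounded_op_def by simp

lemma sin_half_commute:
  assumes "real_bounded_op B" "commute B cos_op" "commute B sin_op"
  shows "commute B sin_half"
  using sin_sign_commute[OF assms] half_angle_commute[of "-1" B] assms
  unfolding commute_def sin_half_def by simp

lemma commute_half_angle_sin_op: "\<bar>s\<bar> \<le> 1 \<Longrightarrow> commute (half_angle s) sin_op"
  by (rule commute_sym[OF half_angle_commute[OF _ sin_op_real_bounded commute_sin_cos_op]])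

lemma commute_half_angle_sin_sign: "\<bar>s\<bar> \<le> 1 \<Longrightarrow> commute (half_angle s) sin_sign"
  by (rule sin_sign_commute[OF half_angle_real_bounded
        commute_sym[OF half_angle_commute[OF _ cos_op_real_bounded commute_refl]]
        commute_half_angle_sin_op])

lemma sin_nonneg_proj_additive: "additive_op sin_nonneg_proj"
  unfolding sin_nonneg_proj_def
  by (rule kernel_proj_additive[OF sin_neg_part_additive sin_neg_part_self_adjoint sin_neg_part_bounded_by])

lemma sin_nonneg_proj_complex_hom: "complex_hom sin_nonneg_proj"
  unfolding sin_nonneg_proj_def
  by (rule kernel_proj_complex_hom[OF sin_neg_part_additive sin_neg_part_self_adjoint
        sin_neg_part_bounded_by sin_neg_part_complex_hom])

lemma sin_sign_additive: "additive_op sin_sign"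
  using sin_nonneg_proj_additive
  unfolding additive_op_def sin_sign_def by (simp add: sc_add_right algebra_simps)

lemma sin_sign_complex_hom: "complex_hom sin_sign"
  using sin_nonneg_proj_complex_hom
  unfolding complex_hom_def sin_sign_def by (simp add: sc_diff_right sc_assoc mult.commute)

lemma sin_sign_self_adjoint: "self_adjoint sin_sign"
  using kernel_proj_self_adjoint[OF sin_neg_part_additive sin_neg_part_self_adjoint sin_neg_part_bounded_by]
  unfolding self_adjoint_def sin_sign_def sin_nonneg_proj_def
  by (simp add: ip_diff_left ip_diff_right ip_sc_left ip_sc_right)

lemma sin_sign_involution: "sin_sign (sin_sign x) = x"
proof -
  have P: "sin_nonneg_proj (x + y) = sin_nonneg_proj x + sin_nonneg_proj y"
    "sin_nonneg_proj (x - y) = sin_nonneg_proj x - sin_nonneg_proj y"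
    "sin_nonneg_proj (sc a x) = sc a (sin_nonneg_proj x)"
    "sin_nonneg_proj (sin_nonneg_proj x) = sin_nonneg_proj x" for x y a
    using sin_nonneg_proj_additive additive_op_diff[OF sin_nonneg_proj_additive] sin_nonneg_proj_complex_hom
      kernel_proj_idem[OF sin_neg_part_additive sin_neg_part_self_adjoint sin_neg_part_bounded_by]
    by (simp_all add: additive_op_def complex_hom_def sin_nonneg_proj_def)
  show ?thesis by (simp add: sin_sign_def P sc_two sc_diff_right sc_add_right)
qed

lemma sin_sign_abs_sin_op: "sin_sign (abs_sin_op x) = sin_op x"
proof -
  have "commute abs_sin_op sin_nonneg_proj"
    by (rule sin_nonneg_proj_commute[OF abs_sin_op_real_bounded
          commute_sym[OF abs_sin_op_commute[OF cos_op_real_bounded commute_refl]]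
          commute_sym[OF commute_sin_op_abs_sin_op]])
  then have "sin_sign (abs_sin_op x) = (abs_sin_op (sin_nonneg_proj x) + abs_sin_op (sin_nonneg_proj x)) - abs_sin_op x"
    by (simp add: sin_sign_def sc_two commute_def)
  also have "\<dots> = (abs_sin_op (sin_nonneg_proj x) + sin_op (sin_nonneg_proj x)) - abs_sin_op x"
    by (simp add: sin_nonneg_proj_in_kernel)
  also have "\<dots> = sin_op x" by (simp add: sin_nonneg_proj_abs_sin_plus_sin)
  finally show ?thesis .
qed

lemma sin_half_additive: "additive_op sin_half"
  using sin_sign_additive half_angle_additive[of "-1"] unfolding additive_op_def sin_half_def by simp

lemma sin_half_complex_hom: "complex_hom sin_half"
  using sin_sign_complex_hom half_angle_complex_hom[of "-1"] unfolding complex_hom_def sin_half_def by simp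

lemma sin_half_self_adjoint: "self_adjoint sin_half"
  using sin_sign_self_adjoint half_angle_self_adjoint[of "-1"] commute_half_angle_sin_sign[of "-1"]
  unfolding self_adjoint_def sin_half_def commute_def by simp

lemma sin_half_squared: "sin_half (sin_half x) = sc (1/2) (x - cos_op x)"
  using commute_half_angle_sin_sign[of "-1"]
  by (simp add: sin_half_def commute_def sin_sign_involution abs_sin_half_squared)

lemma commute_cos_half_sin_half: "commute cos_half sin_half"
  using commute_half_angle_sin_sign[of 1] commute_half_angles[of 1 "-1"]
  unfolding commute_def sin_half_def by simp

lemma cos_half_sin_half: "cos_half (sin_half x) = sc (1/2) (sin_op x)"
proof -
  have "cos_half (abs_sin_half x) = sc (1/2) (abs_sin_op x)"
    by (simp add: abs_sin_op_def sc_assoc sc_one)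
  then have "cos_half (sin_half x) = sin_sign (sc (1/2) (abs_sin_op x))"
    using commute_half_angle_sin_sign[of 1] by (simp add: sin_half_def commute_def)
  also have "\<dots> = sc (1/2) (sin_op x)"
    using sin_sign_complex_hom by (simp add: complex_hom_def sin_sign_abs_sin_op)
  finally show ?thesis .
qed

end

context unitary_sqrt
begin

definition sqrt_op :: "'h \<Rightarrow> 'h" where
  "sqrt_op x = cos_half x + sc \<i> (sin_half x)"

definition sqrt_op_inv :: "'h \<Rightarrow> 'h" where
  "sqrt_op_inv x = cos_half x - sc \<i> (sin_half x)"

lemma sqrt_op_additive: "additive_op sqrt_op"
  using half_angle_additive[of 1] sin_half_additive
  unfolding additive_op_def sqrt_op_def by (simp add: sc_add_right algebra_simps)

lemma sqrt_op_complex_hom: "complex_hom sqrt_op"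
  using half_angle_complex_hom[of 1] sin_half_complex_hom
  unfolding complex_hom_def sqrt_op_def by (simp add: sc_add_right sc_assoc mult.commute)

lemma cos_sin_half_simps:
  "cos_half (x + y) = cos_half x + cos_half y" "sin_half (x + y) = sin_half x + sin_half y"
  "cos_half (x - y) = cos_half x - cos_half y" "sin_half (x - y) = sin_half x - sin_half y"
  "cos_half (sc a x) = sc a (cos_half x)" "sin_half (sc a x) = sc a (sin_half x)"
  "sin_half (cos_half x) = cos_half (sin_half x)"
  using half_angle_additive[of 1] sin_half_additive additive_op_diff[of cos_half]
    additive_op_diff[of sin_half] half_angle_complex_hom[of 1] sin_half_complex_hom
    commute_cos_half_sin_half
  by (simp_all add: additive_op_def complex_hom_def commute_def)

lemma cos_half_sq_plus_sin_half_sq: "cos_half (cos_half x) + sin_half (sin_half x) = x"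
proof -
  have "cos_half (cos_half x) + sin_half (sin_half x) = sc (1/2) ((x + cos_op x) + (x - cos_op x))"
    by (simp only: cos_half_squared sin_half_squared sc_add_right[symmetric])
  also have "(x + cos_op x) + (x - cos_op x) = x + x" by simp
  finally show ?thesis by (simp add: sc_add_right sc_half_double)
qed

lemma sqrt_op_squared: "sqrt_op (sqrt_op x) = A x"
proof -
  have "sqrt_op (sqrt_op x)
      = (cos_half (cos_half x) - sin_half (sin_half x)) + sc \<i> (cos_half (sin_half x) + cos_half (sin_half x))"
    by (simp add: sqrt_op_def cos_sin_half_simps sc_ii sc_add_right algebra_simps)
  also have "cos_half (cos_half x) - sin_half (sin_half x) = sc (1/2) ((x + cos_op x) - (x - cos_op x))"
    by (simp only: cos_half_squared sin_half_squared sc_diff_right[symmetric])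
  also have "(x + cos_op x) - (x - cos_op x) = cos_op x + cos_op x" by simp
  also have "cos_half (sin_half x) + cos_half (sin_half x) = sin_op x"
    by (simp add: cos_half_sin_half sc_half_double)
  finally have "sqrt_op (sqrt_op x) = cos_op x + sc \<i> (sin_op x)" by (simp add: sc_add_right sc_half_double)
  then show ?thesis using A_cos_sin[of x] by simp
qed

lemma sqrt_op_sqrt_op_inv: "sqrt_op (sqrt_op_inv x) = x"
  and sqrt_op_inv_sqrt_op: "sqrt_op_inv (sqrt_op x) = x"
  using cos_half_sq_plus_sin_half_sq[of x]
  by (simp_all add: sqrt_op_def sqrt_op_inv_def cos_sin_half_simps sc_ii sc_add_right sc_diff_right
      algebra_simps)

lemma ip_sqrt_op: "ip (sqrt_op x) (sqrt_op y) = ip x y"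
proof -
  have sa: "ip (cos_half x) y = ip x (cos_half y)" "ip (sin_half x) y = ip x (sin_half y)" for x y
    using half_angle_self_adjoint[of 1] sin_half_self_adjoint by (simp_all add: self_adjoint_def)
  have "ip (sqrt_op x) (sqrt_op y) = ip x (cos_half (cos_half y)) + ip x (sin_half (sin_half y))"
    by (simp add: sqrt_op_def ip_add_left ip_add_right ip_sc_left ip_sc_right sa cos_sin_half_simps
        algebra_simps)
  also have "\<dots> = ip x y" by (simp add: ip_add_right[symmetric] cos_half_sq_plus_sin_half_sq)
  finally show ?thesis .
qed

lemma sqrt_op_unitary: "unitary_op sc ip sqrt_op"
proof -
  have "bij sqrt_op"
    by (rule o_bij[of sqrt_op_inv]) (simp_all add: fun_eq_iff sqrt_op_sqrt_op_inv sqrt_op_inv_sqrt_op)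
  then show ?thesis
    using sqrt_op_additive sqrt_op_complex_hom ip_sqrt_op
    by (simp add: unitary_op_def additive_op_def complex_hom_def)
qed

lemma inv_sqrt_op: "inv_into UNIV sqrt_op = sqrt_op_inv"
  using sqrt_op_sqrt_op_inv sqrt_op_inv_sqrt_op by (intro inv_equality) auto

lemma sqrt_op_commute:
  assumes "real_bounded_op B" "complex_hom B" "commute B A"
  shows "commute B sqrt_op"
  using commute_cos_sin_op[OF _ assms(2,3)] assms(1,2)
    half_angle_commute[OF _ assms(1)] sin_half_commute[OF assms(1)]
  unfolding commute_def sqrt_op_def real_bounded_op_def complex_hom_def additive_op_def
  by simp

lemma sqrt_op_conj:
  assumes "real_bounded_op J" "conj_hom J" "\<And>x. J (A x) = Ainv (J x)"
  shows "J (sqrt_op x) = sqrt_op_inv (J x)"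
proof -
  have J: "additive_op J" using assms(1) by (simp add: real_bounded_op_def)
  note cs = conj_commute_cos_sin_op[OF J assms(2,3)]
  have "commute J cos_half" "commute J sin_half"
    using half_angle_commute[OF _ assms(1) cs(1)] sin_half_commute[OF assms(1) cs] by simp_all
  then show ?thesis
    using J assms(2) additive_op_minus[OF J]
    by (simp add: commute_def sqrt_op_def sqrt_op_inv_def additive_op_def conj_hom_def sc_minus_left)
qed

end

context unitary_sqrt
begin

lemma unitary_commute_sqrt_op:
  assumes "unitary_op sc ip B" "B \<circ> A = A \<circ> B"
  shows "sqrt_op \<circ> B = B \<circ> sqrt_op"
proof -
  have "complex_hom B" using assms(1) by (simp add: unitary_op_def complex_hom_def)
  then have "commute B sqrt_op"
    using sqrt_op_commute[OF unitary_op_real_bounded[OF assms(1)]] assms(2)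
    by (simp add: commute_def fun_eq_iff)
  then show ?thesis by (simp add: commute_def fun_eq_iff)
qed

lemma antiunitary_conj_sqrt_op:
  assumes "antiunitary_op sc ip J" "\<And>x. J (A x) = Ainv (J x)"
  shows "J \<circ> sqrt_op \<circ> inv_into UNIV J = inv_into UNIV sqrt_op"
proof
  fix y
  have "conj_hom J" "bij J" using assms(1) by (simp_all add: antiunitary_op_def conj_hom_def)
  then show "(J \<circ> sqrt_op \<circ> inv_into UNIV J) y = inv_into UNIV sqrt_op y"
    using sqrt_op_conj[OF antiunitary_op_real_bounded[OF assms(1)] _ assms(2)]
    by (simp add: inv_sqrt_op bij_is_surj surj_f_inv_f)
qed

end

section \<open>Graded groups and their representations\<close>

lemma (in group) inv_commute:
  assumes "a \<in> carrier G" "h \<in> carrier G" "a \<otimes> h = h \<otimes> a"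
  shows "inv a \<otimes> h = h \<otimes> inv a"
proof -
  have "inv a \<otimes> h = inv a \<otimes> h \<otimes> (a \<otimes> inv a)" using assms by (simp add: r_inv)
  also have "\<dots> = inv a \<otimes> (h \<otimes> a) \<otimes> inv a" using assms by (simp add: m_assoc)
  also have "\<dots> = inv a \<otimes> (a \<otimes> h) \<otimes> inv a" using assms by simp
  also have "inv a \<otimes> (a \<otimes> h) = h" using assms(1,2) by (simp add: m_assoc[symmetric] l_inv)
  finally show ?thesis .
qed

lemma (in group) involution_coset_inverts:
  assumes s: "s \<in> carrier G" and a: "a \<in> carrier G" and g: "g \<in> carrier G"
    and ss: "s \<otimes> s = \<one>" and sas: "s \<otimes> a \<otimes> s = inv a"
    and centralizes: "a \<otimes> (g \<otimes> s) = (g \<otimes> s) \<otimes> a"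
  shows "g \<otimes> a = inv a \<otimes> g"
proof -
  have sa: "s \<otimes> a = inv a \<otimes> s"
  proof -
    have "s \<otimes> a = s \<otimes> a \<otimes> (s \<otimes> s)" using s a ss by simp
    also have "\<dots> = (s \<otimes> a \<otimes> s) \<otimes> s" using s a by (simp add: m_assoc)
    finally show ?thesis using sas by simp
  qed
  have "g \<otimes> a = g \<otimes> (s \<otimes> s) \<otimes> a" using g ss by simp
  also have "\<dots> = (g \<otimes> s) \<otimes> (s \<otimes> a)" using s a g by (simp add: m_assoc)
  also have "\<dots> = ((g \<otimes> s) \<otimes> inv a) \<otimes> s" using s a g by (simp add: sa m_assoc)
  also have "\<dots> = (inv a \<otimes> (g \<otimes> s)) \<otimes> s" using inv_commute[OF a _ centralizes] s g by simp
  also have "\<dots> = inv a \<otimes> g" using s a g ss by (simp add: m_assoc)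
  finally show ?thesis .
qed

context
  fixes G :: "('g, 'b) monoid_scheme" and T :: "'g topology" and eps :: "'g \<Rightarrow> real"
  assumes graded: "graded_top_group G T eps"
begin

lemma graded_group: "group G"
  using graded by (simp add: graded_top_group_def)

lemma grading_mult: "x \<in> carrier G \<Longrightarrow> y \<in> carrier G \<Longrightarrow> eps (x \<otimes>\<^bsub>G\<^esub> y) = eps x * eps y"
  using graded by (simp add: graded_top_group_def)

lemma grading_one: "eps \<one>\<^bsub>G\<^esub> = 1"
proof -
  interpret group G by (rule graded_group)
  have "eps \<one>\<^bsub>G\<^esub> = eps \<one>\<^bsub>G\<^esub> * eps \<one>\<^bsub>G\<^esub>"
    using grading_mult[OF one_closed one_closed] by simp
  moreover have "eps \<one>\<^bsub>G\<^esub> \<in> {1, -1}"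
    using graded by (simp add: graded_top_group_def)
  ultimately show ?thesis by auto
qed

end

context
  fixes G :: "('g, 'b) monoid_scheme" and T :: "'g topology" and eps :: "'g \<Rightarrow> real"
    and sc :: "complex \<Rightarrow> 'h::ab_group_add \<Rightarrow> 'h" and ip :: "'h \<Rightarrow> 'h \<Rightarrow> complex"
    and U :: "'g \<Rightarrow> 'h \<Rightarrow> 'h"
  assumes rep: "au_rep G T eps sc ip U"
begin

lemma au_rep_unitary: "g \<in> carrier G \<Longrightarrow> eps g = 1 \<Longrightarrow> unitary_op sc ip (U g)"
  and au_rep_antiunitary: "g \<in> carrier G \<Longrightarrow> eps g = -1 \<Longrightarrow> antiunitary_op sc ip (U g)"
  and au_rep_mult: "g \<in> carrier G \<Longrightarrow> h \<in> carrier G \<Longrightarrow> U (g \<otimes>\<^bsub>G\<^esub> h) x = U g (U h x)"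
  using rep by (simp_all add: au_rep_def)

lemma au_rep_inv:
  assumes graded: "graded_top_group G T eps" and g: "g \<in> carrier G"
  shows "U g (U (inv\<^bsub>G\<^esub> g) x) = x"
proof -
  interpret group G by (rule graded_group[OF graded])
  have "inj (U \<one>\<^bsub>G\<^esub>)"
    using au_rep_unitary[OF one_closed grading_one[OF graded]] by (simp add: unitary_op_def bij_is_inj)
  moreover have "U \<one>\<^bsub>G\<^esub> (U \<one>\<^bsub>G\<^esub> y) = U \<one>\<^bsub>G\<^esub> y" for y
    using au_rep_mult[OF one_closed one_closed, of y] by simp
  ultimately have "U \<one>\<^bsub>G\<^esub> y = y" for y by (simp add: inj_eq)
  then show ?thesis using au_rep_mult[OF g inv_closed[OF g]] g by simp
qed

end

theorem proposition4p16:
  fixes G :: "('g, 'b) monoid_scheme" and T :: "'g topology" and eps :: "'g \<Rightarrow> real"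
    and sc :: "complex \<Rightarrow> 'h::ab_group_add \<Rightarrow> 'h" and ip :: "'h \<Rightarrow> 'h \<Rightarrow> complex"
    and U :: "'g \<Rightarrow> 'h \<Rightarrow> 'h" and \<sigma> \<alpha> :: 'g
  assumes "chilbert sc ip"
    and "graded_top_group G T eps"
    and "\<sigma> \<in> carrier G" and "eps \<sigma> = -1" and "\<sigma> \<otimes>\<^bsub>G\<^esub> \<sigma> = \<one>\<^bsub>G\<^esub>"
    and "au_rep G T eps sc ip U"
    and "\<alpha> \<in> carrier G" and "eps \<alpha> = 1"
    and "\<forall>g\<in>carrier G. eps g = 1 \<longrightarrow> \<alpha> \<otimes>\<^bsub>G\<^esub> g = g \<otimes>\<^bsub>G\<^esub> \<alpha>"
    and "\<sigma> \<otimes>\<^bsub>G\<^esub> \<alpha> \<otimes>\<^bsub>G\<^esub> \<sigma> = inv\<^bsub>G\<^esub> \<alpha>"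
  shows "\<exists>Z. unitary_op sc ip Z
           \<and> (\<forall>g\<in>carrier G. eps g = 1 \<longrightarrow> Z \<circ> U g = U g \<circ> Z)
           \<and> Z \<circ> Z = U \<alpha>
           \<and> (\<forall>g\<in>carrier G. eps g = -1 \<longrightarrow> U g \<circ> Z \<circ> inv_into UNIV (U g) = inv_into UNIV Z)"
proof -
  note graded = assms(2) and rep = assms(6)
  interpret group G by (rule graded_group[OF graded])
  interpret unitary_sqrt sc ip "U \<alpha>"
    using assms(1) au_rep_unitary[OF rep assms(7,8)] by (simp add: unitary_sqrt_def unitary_sqrt_axioms_def)
  have U_mult: "U (g \<otimes>\<^bsub>G\<^esub> h) = U g \<circ> U h" if "g \<in> carrier G" "h \<in> carrier G" for g h
    using au_rep_mult[OF rep that] by (simp add: fun_eq_iff)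
  have Ainv: "U (inv\<^bsub>G\<^esub> \<alpha>) x = Ainv x" for x
    by (rule Ainv_eqI[symmetric]) (rule au_rep_inv[OF rep graded assms(7)])
  have "U g \<circ> U \<alpha> = U \<alpha> \<circ> U g" if "g \<in> carrier G" "eps g = 1" for g
    using assms(7,9) that by (simp add: U_mult[symmetric])
  moreover have "U g (U \<alpha> x) = Ainv (U g x)" if "g \<in> carrier G" "eps g = -1" for g x
  proof -
    have "eps (g \<otimes>\<^bsub>G\<^esub> \<sigma>) = 1" using grading_mult[OF graded that(1) assms(3)] that assms(4) by simp
    then have "g \<otimes>\<^bsub>G\<^esub> \<alpha> = inv\<^bsub>G\<^esub> \<alpha> \<otimes>\<^bsub>G\<^esub> g"
      using involution_coset_inverts[OF assms(3,7) that(1) assms(5,10)] assms(9) that(1) assms(3) by simp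
    then show ?thesis using au_rep_mult[OF rep] assms(7) that(1) Ainv by (metis inv_closed)
  qed
  ultimately show ?thesis
    using sqrt_op_unitary unitary_commute_sqrt_op[OF au_rep_unitary[OF rep]]
      antiunitary_conj_sqrt_op[OF au_rep_antiunitary[OF rep]] sqrt_op_squared
    by (intro exI[of _ sqrt_op]) (auto simp: fun_eq_iff)
qed

end
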